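(* Let $Q=[(n_1,q_1),\dots,(n_m,q_m)]$ be a compatible pointed irregular type with fission tree nodes as defined in the context, and let $\mathbb A^\flat$ be the set of admissible nodes of height $\le K$. Let $\mathcal R$ be the set of maps $c:\mathbb A^\flat\to\mathbb C$ such that (1) $c(v)\ne0$ for every mandatory node $v$; (2) $c(u)\ne c(w)$ for any two distinct admissible, non-mandatory nodes $u,w$ with the same parent; (3) $c(u)^N\ne c(w)^N$ for any two distinct mandatory nodes $u,w$ with the same parent $p$, where $N=N_p$. Then the map $\mathcal R\to\mathbb C^{ms}$, $c\mapsto\mathbf a(c)$, with $a_{i,j}(c)=c(\langle\tau_{j/r}(q_i)\rangle)$ if $j/r\in A(\mathrm{Levels}(q_i))$ and $a_{i,j}(c)=0$ otherwise, is a homeomorphism of $\mathcal R$ (with the topology from $\mathbb C^{\mathbb A^\flat}$) onto $\mathbf B(Q)$.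
   Context: Exponential factors: finite sums $q=\sum_ka_kx^k$, $a_k\in\mathbb C$, $k\in\mathbb Q_{>0}$; $\mathrm{slope}(q)$ = largest exponent with nonzero coefficient ($0$ if $q=0$); $\mathrm{ram}(q)$ = least $r\ge1$ with $q\in x^{1/r}\mathbb C[x^{1/r}]$. Galois operator $\sigma(\sum a_kx^k)=\sum a_ke^{-2\pi\sqrt{-1}k}x^k$; Stokes circle $\langle q\rangle=\{\sigma^i(q)\}$, $\mathrm{ram}\langle q\rangle:=\mathrm{ram}(q)$. Truncation $\tau_k(\sum a_{k'}x^{k'})=\sum_{k'\ge k}a_{k'}x^{k'}$. $\mathrm{Levels}(q)=\{\mathrm{slope}(q-\sigma^i(q)):i\in\mathbb Z\}\setminus\{0\}$. For $L=\{k_1>\dots>k_m\}$, $r_i$ = lcm of denominators of $k_1,\dots,k_i$, admissible exponents $A(L)=\mathbb N_{>0}\cup\bigcup_i\big((0,k_i]\cap\frac1{r_i}\mathbb N\big)$. Pointed irregular type $Q=[(n_1,q_1),\dots,(n_m,q_m)]$: $n_i\in\mathbb N_{>0}$, $q_i$ in pairwise distinct orbits; compatible if $\langle\tau_k(q_i)\rangle=\langle\tau_k(q_j)\rangle\Rightarrow\tau_k(q_i)=\tau_k(q_j)$ for all $k\in\mathbb Q_{>0}$, $i,j$. $Q'\sim Q$ means same length and multiplicities and $\mathrm{slope}(\sigma^k(q'_i)-\sigma^l(q'_j))=\mathrm{slope}(\sigma^k(q_i)-\sigma^l(q_j))$ for all $i,j$, $0\le k\le\mathrm{ram}(q_i)$,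 $0\le l\le\mathrm{ram}(q_j)$. Configuration space: $r=\mathrm{lcm}_i\mathrm{ram}(q_i)$, $K=\max_i\mathrm{slope}(q_i)$, $s=rK$, $Q_{\mathbf a}=[(n_i,\sum_{j=1}^sa_{i,j}x^{j/r})]$, $\mathbf B(Q)=\{\mathbf a\in\mathbb C^{ms}:Q_{\mathbf a}\sim Q\}$. Fission tree of compatible $Q$: let $A(Q)=\bigcup_iA(\mathrm{Levels}(q_i))$. For $k\in A(Q)$, the nodes of height $k$ are the Stokes circles $\langle\tau_k(q_i)\rangle$, $1\le i\le m$ (a set $\mathbb V_k$). If $k^-$ is the largest element of $A(Q)$ less than $k$, the parent of a node $\langle\tau_{k^-}(q_i)\rangle$ is $\langle\tau_k(q_i)\rangle$ (and the former is a child of the latter). A node $\langle\tau_k(q_i)\rangle$ is admissible if $k\in A(\mathrm{Levels}(q_i))$ and mandatory if $k\in\mathrm{Levels}(q_i)$. The ramification of a node $v=\langle\tau_k(q_i)\rangle$ is $\mathrm{Ram}(v)=\mathrm{ram}(\tau_k(q_i))$. For a node $v$ of height $k$ whose children have height $k^-$ with denominator $b$ (in lowest terms), $N_v=\mathrm{lcm}(\mathrm{Ram}(v),b)/\mathrm{Ram}(v)$. *)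

theory Defs
  imports "HOL-Analysis.Analysis"
begin

text \<open>An exponential factor sum a_k x^k is represented by its coefficient function
  rat => complex (coefficient of x^k). Well-formed: finite support of positive exponents.\<close>

type_synonym expfac = "rat \<Rightarrow> complex"

definition supp_ef :: "expfac \<Rightarrow> rat set" where
  "supp_ef q = {k. q k \<noteq> 0}"

definition is_expfac :: "expfac \<Rightarrow> bool" where
  "is_expfac q \<longleftrightarrow> finite (supp_ef q) \<and> (\<forall>k \<in> supp_ef q. k > 0)"

definition diff_ef :: "expfac \<Rightarrow> expfac \<Rightarrow> expfac" where
  "diff_ef q p = (\<lambda>k. q k - p k)"

definition slope :: "expfac \<Rightarrow> rat" where
  "slope q = (if supp_ef q = {} then 0 else Max (supp_ef q))"

definition ram :: "expfac \<Rightarrow> nat" where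
  "ram q = (LEAST r::nat. r \<ge> 1 \<and> (\<forall>k \<in> supp_ef q. of_nat r * k \<in> \<int>))"

text \<open>sigma^i for an integer i (closed form of the i-th iterate of the Galois operator).\<close>
definition sigma_pow :: "int \<Rightarrow> expfac \<Rightarrow> expfac" where
  "sigma_pow i q = (\<lambda>k. q k * exp (- 2 * of_real pi * \<i> * of_int i * of_rat k))"

definition sigma :: "expfac \<Rightarrow> expfac" where
  "sigma q = (\<lambda>k. q k * exp (- 2 * of_real pi * \<i> * of_rat k))"

definition stokes_circle :: "expfac \<Rightarrow> expfac set" where
  "stokes_circle q = {sigma_pow i q | i. True}"

definition trunc :: "rat \<Rightarrow> expfac \<Rightarrow> expfac" where
  "trunc k q = (\<lambda>k'. if k' \<ge> k then q k' else 0)"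

definition Levels :: "expfac \<Rightarrow> rat set" where
  "Levels q = {slope (diff_ef q (sigma_pow i q)) | i. True} - {0}"

definition denom :: "rat \<Rightarrow> int" where
  "denom k = snd (quotient_of k)"

definition level_ram :: "rat set \<Rightarrow> rat \<Rightarrow> int" where
  "level_ram L ki = Lcm (denom ` {l \<in> L. l \<ge> ki})"

definition admissible_exps :: "rat set \<Rightarrow> rat set" where
  "admissible_exps L =
     {k. \<exists>n::nat. n > 0 \<and> k = of_nat n}
     \<union> (\<Union>ki \<in> L. {k. 0 < k \<and> k \<le> ki \<and> (\<exists>n::nat. k = of_nat n / of_int (level_ram L ki))})"

text \<open>A pointed irregular type is a list of pairs (n_i, q_i); index i ranges over 0..<m.\<close>
type_synonym pit = "(nat \<times> expfac) list"

definition pointed_irregular_type :: "pit \<Rightarrow> bool" where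
  "pointed_irregular_type Q \<longleftrightarrow>
     (\<forall>i < length Q. fst (Q ! i) > 0 \<and> is_expfac (snd (Q ! i))) \<and>
     (\<forall>i < length Q. \<forall>j < length Q. i \<noteq> j \<longrightarrow>
        stokes_circle (snd (Q ! i)) \<noteq> stokes_circle (snd (Q ! j)))"

definition compatible :: "pit \<Rightarrow> bool" where
  "compatible Q \<longleftrightarrow>
     (\<forall>k::rat. k > 0 \<longrightarrow> (\<forall>i < length Q. \<forall>j < length Q.
        stokes_circle (trunc k (snd (Q ! i))) = stokes_circle (trunc k (snd (Q ! j)))
        \<longrightarrow> trunc k (snd (Q ! i)) = trunc k (snd (Q ! j))))"

definition pit_sim :: "pit \<Rightarrow> pit \<Rightarrow> bool" where
  "pit_sim Q' Q \<longleftrightarrow> length Q' = length Q \<and>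
     (\<forall>i < length Q. fst (Q' ! i) = fst (Q ! i)) \<and>
     (\<forall>i < length Q. \<forall>j < length Q. \<forall>k l :: nat.
        k \<le> ram (snd (Q ! i)) \<longrightarrow> l \<le> ram (snd (Q ! j)) \<longrightarrow>
        slope (diff_ef (sigma_pow (int k) (snd (Q' ! i))) (sigma_pow (int l) (snd (Q' ! j))))
        = slope (diff_ef (sigma_pow (int k) (snd (Q ! i))) (sigma_pow (int l) (snd (Q ! j)))))"

definition cfg_r :: "pit \<Rightarrow> nat" where
  "cfg_r Q = Lcm (set (map (\<lambda>p. ram (snd p)) Q))"

definition cfg_K :: "pit \<Rightarrow> rat" where
  "cfg_K Q = Max (set (map (\<lambda>p. slope (snd p)) Q))"

definition cfg_s :: "pit \<Rightarrow> nat" where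
  "cfg_s Q = nat \<lfloor>of_nat (cfg_r Q) * cfg_K Q\<rfloor>"

text \<open>Vectors a in C^{ms}: functions on pairs (i,j), i < m, 1 \<le> j \<le> s, extended by 0.\<close>
definition cfg_index :: "pit \<Rightarrow> (nat \<times> nat) set" where
  "cfg_index Q = {(i, j). i < length Q \<and> 1 \<le> j \<and> j \<le> cfg_s Q}"

definition Q_of :: "pit \<Rightarrow> (nat \<times> nat \<Rightarrow> complex) \<Rightarrow> pit" where
  "Q_of Q a = map (\<lambda>i. (fst (Q ! i),
       (\<lambda>k. \<Sum>j = 1..cfg_s Q. if k = of_nat j / of_nat (cfg_r Q) then a (i, j) else 0)))
     [0..<length Q]"

definition config_space :: "pit \<Rightarrow> (nat \<times> nat \<Rightarrow> complex) set" where
  "config_space Q = {a. (\<forall>x. x \<notin> cfg_index Q \<longrightarrow> a x = 0) \<and> pit_sim (Q_of Q a) Q}"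

definition AQ :: "pit \<Rightarrow> rat set" where
  "AQ Q = (\<Union>i < length Q. admissible_exps (Levels (snd (Q ! i))))"

text \<open>A node is a pair (height k, Stokes circle <tau_k(q_i)>).\<close>
type_synonym node = "rat \<times> expfac set"

definition tree_nodes :: "pit \<Rightarrow> node set" where
  "tree_nodes Q = {(k, stokes_circle (trunc k (snd (Q ! i)))) | k i. k \<in> AQ Q \<and> i < length Q}"

definition admissible_node :: "pit \<Rightarrow> node \<Rightarrow> bool" where
  "admissible_node Q v \<longleftrightarrow> (\<exists>i < length Q.
     snd v = stokes_circle (trunc (fst v) (snd (Q ! i))) \<and>
     fst v \<in> admissible_exps (Levels (snd (Q ! i))))"

definition mandatory_node :: "pit \<Rightarrow> node \<Rightarrow> bool" where
  "mandatory_node Q v \<longleftrightarrow> (\<exists>i < length Q.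
     snd v = stokes_circle (trunc (fst v) (snd (Q ! i))) \<and>
     fst v \<in> Levels (snd (Q ! i)))"

definition is_parent :: "pit \<Rightarrow> node \<Rightarrow> node \<Rightarrow> bool" where
  "is_parent Q v p \<longleftrightarrow> (\<exists>i < length Q. \<exists>k k'.
     k \<in> AQ Q \<and> k' \<in> AQ Q \<and> k < k' \<and> (\<forall>k'' \<in> AQ Q. \<not> (k < k'' \<and> k'' < k')) \<and>
     v = (k, stokes_circle (trunc k (snd (Q ! i)))) \<and>
     p = (k', stokes_circle (trunc k' (snd (Q ! i)))))"

definition node_Ram :: "node \<Rightarrow> nat" where
  "node_Ram v = ram (SOME q. q \<in> snd v)"

definition children_height :: "pit \<Rightarrow> node \<Rightarrow> rat" where
  "children_height Q v = (GREATEST k. k \<in> AQ Q \<and> k < fst v)"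

definition node_N :: "pit \<Rightarrow> node \<Rightarrow> nat" where
  "node_N Q v = nat (lcm (int (node_Ram v)) (denom (children_height Q v)) div int (node_Ram v))"

definition A_flat :: "pit \<Rightarrow> node set" where
  "A_flat Q = {v. admissible_node Q v \<and> fst v \<le> cfg_K Q}"

text \<open>Maps A_flat -> C are represented as functions on all nodes vanishing outside A_flat.\<close>
definition R_space :: "pit \<Rightarrow> (node \<Rightarrow> complex) set" where
  "R_space Q = {c. (\<forall>v. v \<notin> A_flat Q \<longrightarrow> c v = 0) \<and>
     (\<forall>v \<in> A_flat Q. mandatory_node Q v \<longrightarrow> c v \<noteq> 0) \<and>
     (\<forall>u \<in> A_flat Q. \<forall>w \<in> A_flat Q. \<forall>p. u \<noteq> w \<and>
        \<not> mandatory_node Q u \<and> \<not> mandatory_node Q w \<and>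
        is_parent Q u p \<and> is_parent Q w p \<longrightarrow> c u \<noteq> c w) \<and>
     (\<forall>u \<in> A_flat Q. \<forall>w \<in> A_flat Q. \<forall>p. u \<noteq> w \<and>
        mandatory_node Q u \<and> mandatory_node Q w \<and>
        is_parent Q u p \<and> is_parent Q w p \<longrightarrow> c u ^ node_N Q p \<noteq> c w ^ node_N Q p)}"

definition coeff_map :: "pit \<Rightarrow> (node \<Rightarrow> complex) \<Rightarrow> (nat \<times> nat \<Rightarrow> complex)" where
  "coeff_map Q c = (\<lambda>(i, j).
     if (i, j) \<in> cfg_index Q \<and>
        of_nat j / of_nat (cfg_r Q) \<in> admissible_exps (Levels (snd (Q ! i)))
     then c (of_nat j / of_nat (cfg_r Q),
             stokes_circle (trunc (of_nat j / of_nat (cfg_r Q)) (snd (Q ! i))))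
     else 0)"

end

theory Submission
  imports Defs
begin

text \<open>
  The rotation \<open>\<sigma>\<^sup>n\<close> multiplies the coefficient of \<open>x\<^sup>k\<close> by \<open>zeta (n k) = exp (-2\<pi>i n k)\<close>. For
  components \<open>q\<^sub>i, q\<^sub>j\<close> of \<open>Q\<close>, the slope \<open>h\<close> of \<open>\<sigma>\<^sup>n q\<^sub>i - q\<^sub>j\<close> is the height at which their branches
  of the fission tree split: above \<open>h\<close> the truncations lie on one Stokes circle, hence coincide by
  compatibility, and \<open>\<sigma>\<^sup>n\<close> fixes the common coefficients. The coefficients of a point of \<open>B(Q)\<close>
  sit at admissible exponents (the largest non-admissible one would produce a slope that \<open>Q\<close>
  does not have) and, by the same splitting argument, agree on shared nodes: they are functions
  on the admissible nodes of height at most \<open>K\<close>, and the coefficient map just renames coordinates. It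
  preserves all slopes iff at each splitting height the rotated coefficients \<open>c(u) zeta (n h)\<close>
  and \<open>c(w)\<close> of the two nodes that split there still differ. The rotations fixing their parent
  \<open>p\<close> realise exactly the \<open>N\<^sub>p\<close>-th roots of unity as \<open>zeta (n h)\<close>, and this is what conditions
  (1)-(3) express.
\<close>

section \<open>Roots of unity\<close>

definition zeta :: "rat \<Rightarrow> complex" where
  "zeta t = exp (- 2 * of_real pi * \<i> * of_rat t)"

lemma zeta_add: "zeta (a + b) = zeta a * zeta b"
  unfolding zeta_def by (simp add: of_rat_add distrib_left exp_add[symmetric] algebra_simps)

lemma zeta_nonzero [simp]: "zeta t \<noteq> 0"
  unfolding zeta_def by simp

lemma zeta_power: "zeta t ^ N = zeta (of_nat N * t)"
  unfolding zeta_def by (simp add: exp_of_nat_mult[symmetric] of_rat_mult algebra_simps)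

lemma zeta_eq_1_iff: "zeta t = 1 \<longleftrightarrow> t \<in> \<int>"
proof -
  have of_rat: "(of_rat t :: complex) = of_real (of_rat t)"
    by (cases t) (simp add: of_rat_rat)
  have "zeta t = 1 \<longleftrightarrow> (\<exists>n::int. - (2 * pi * of_rat t) = real_of_int (2 * n) * pi)"
    unfolding zeta_def exp_eq_1 by (simp add: of_rat)
  also have "\<dots> \<longleftrightarrow> (\<exists>n::int. (of_rat t :: real) = of_int (- n))"
  proof (intro ex_cong1)
    fix n :: int
    have "- (2 * pi * of_rat t) = real_of_int (2 * n) * pi \<longleftrightarrow> pi * (of_rat t + of_int n) = pi * 0"
      by (simp add: algebra_simps; linarith)
    then show "- (2 * pi * of_rat t) = real_of_int (2 * n) * pi \<longleftrightarrow> (of_rat t :: real) = of_int (- n)"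
      using pi_neq_zero by simp linarith
  qed
  also have "\<dots> \<longleftrightarrow> t \<in> \<int>"
    by (metis Ints_cases Ints_of_int minus_minus of_rat_eq_iff of_rat_of_int_eq)
  finally show ?thesis .
qed

lemma zeta_Ints [simp]: "t \<in> \<int> \<Longrightarrow> zeta t = 1"
  by (simp add: zeta_eq_1_iff)

lemma zeta_eq_iff: "zeta a = zeta b \<longleftrightarrow> a - b \<in> \<int>"
proof -
  have "zeta a = zeta (a - b) * zeta b" by (simp add: zeta_add[symmetric])
  then show ?thesis by (metis zeta_eq_1_iff mult_cancel_right mult_1 zeta_nonzero)
qed

lemma denom_pos: "denom x > 0"
  unfolding denom_def by (rule quotient_of_denom_pos')

lemma of_int_mult_Ints_iff: "of_int n * x \<in> \<int> \<longleftrightarrow> denom x dvd n"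
proof -
  obtain a b where q: "quotient_of x = (a, b)" by (cases "quotient_of x")
  have b: "b > 0" using q by (rule quotient_of_denom_pos)
  have "x = of_int a / of_int b" using q by (simp add: quotient_of_div)
  then have x: "of_int n * x = of_int (n * a) / of_int b" by simp
  have "of_int n * x \<in> \<int> \<longleftrightarrow> b dvd n * a"
  proof
    assume "of_int n * x \<in> \<int>"
    then obtain z where "(of_int (n * a) / of_int b :: rat) = of_int z" unfolding x by (auto elim: Ints_cases)
    then have "(of_int (n * a) :: rat) = of_int (z * b)" using b by (simp add: field_simps)
    then show "b dvd n * a" by (metis dvd_triv_right of_int_eq_iff)
  next
    assume "b dvd n * a"
    then obtain z where "n * a = b * z" by (elim dvdE)
    then show "of_int n * x \<in> \<int>" unfolding x using b by simp
  qed
  also have "\<dots> \<longleftrightarrow> b dvd n"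
    using quotient_of_coprime[OF q] by (metis coprime_commute coprime_dvd_mult_left_iff)
  finally show ?thesis using q by (simp add: denom_def)
qed

lemma inj_on_zeta_multiples:
  fixes R N :: int and h :: rat
  assumes "R > 0" and "lcm R (denom h) = R * N"
  shows "inj_on (\<lambda>m. zeta (of_int (m * R) * h)) {0..<N}"
proof (rule inj_onI)
  fix m1 m2 assume m: "m1 \<in> {0..<N}" "m2 \<in> {0..<N}"
    and "zeta (of_int (m1 * R) * h) = zeta (of_int (m2 * R) * h)"
  then have "of_int ((m1 - m2) * R) * h \<in> \<int>" unfolding zeta_eq_iff by (simp add: algebra_simps)
  then have "denom h dvd (m1 - m2) * R" by (simp only: of_int_mult_Ints_iff)
  then have "lcm R (denom h) dvd (m1 - m2) * R" by (simp add: lcm_least)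
  then have dvd: "N dvd m1 - m2" using assms by (simp add: mult.commute)
  show "m1 = m2"
  proof (rule ccontr)
    assume "m1 \<noteq> m2"
    then have "\<bar>N\<bar> \<le> \<bar>m1 - m2\<bar>" using dvd by (intro dvd_imp_le_int) auto
    moreover have "\<bar>m1 - m2\<bar> < N" using m by auto
    ultimately show False by simp
  qed
qed

lemma zeta_multiples_eq_roots_of_unity:
  fixes R :: int and h :: rat
  assumes R: "R > 0"
  shows "range (\<lambda>m::int. zeta (of_int (m * R) * h)) = {w. w ^ nat (lcm R (denom h) div R) = 1}"
proof -
  define f where "f = (\<lambda>m::int. zeta (of_int (m * R) * h))"
  define L where "L = lcm R (denom h)"
  obtain N' where LN: "L = R * N'" unfolding L_def by (metis dvd_lcm1 dvdE)
  have "L > 0" unfolding L_def using R denom_pos[of h] by (simp add: lcm_pos_int)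
  then have "N' > 0" using R LN by (simp add: zero_less_mult_iff)
  define N where "N = nat N'"
  have NN: "int N = N'" and Npos: "N > 0" unfolding N_def using \<open>N' > 0\<close> by simp_all
  have N: "nat (L div R) = N" unfolding LN N_def using R by simp
  have roots: "range f \<subseteq> {w. w ^ N = 1}"
  proof clarify
    fix m
    have "of_int L * h \<in> \<int>" unfolding L_def of_int_mult_Ints_iff by simp
    moreover have "f m ^ N = zeta (of_int m * (of_int L * h))"
      unfolding f_def zeta_power LN NN[symmetric] by (simp add: algebra_simps)
    ultimately show "f m ^ N = 1" by (simp add: Ints_mult)
  qed
  have card: "card {w::complex. w ^ N = 1} = N" using card_roots_unity_eq Npos by blast
  then have "finite {w::complex. w ^ N = 1}" using Npos by (intro card_ge_0_finite) simp
  moreover have "f ` {0..<N'} \<subseteq> {w. w ^ N = 1}" using roots by auto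
  moreover have "card (f ` {0..<N'}) = N"
    using inj_on_zeta_multiples[OF R LN[unfolded L_def]] NN unfolding f_def by (simp add: card_image)
  ultimately have "f ` {0..<N'} = {w. w ^ N = 1}" using card card_subset_eq by metis
  then show ?thesis using roots unfolding f_def[symmetric] L_def[symmetric] N by blast
qed

section \<open>Exponential factors\<close>

lemma sigma_pow_apply: "sigma_pow n q k = q k * zeta (of_int n * k)"
  unfolding sigma_pow_def zeta_def by (simp add: of_rat_mult algebra_simps)

lemma sigma_pow_add: "sigma_pow a (sigma_pow b q) = sigma_pow (a + b) q"
  by (rule ext) (simp add: sigma_pow_apply zeta_add[symmetric] algebra_simps)

lemma sigma_pow_0 [simp]: "sigma_pow 0 q = q"
  by (rule ext) (simp add: sigma_pow_apply zeta_def)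

lemma supp_ef_sigma_pow [simp]: "supp_ef (sigma_pow n q) = supp_ef q"
  by (auto simp: supp_ef_def sigma_pow_apply)

lemma is_expfac_sigma_pow [simp]: "is_expfac (sigma_pow n q) = is_expfac q"
  by (simp add: is_expfac_def)

lemma ram_sigma_pow [simp]: "ram (sigma_pow n q) = ram q"
  unfolding ram_def by simp

lemma sigma_pow_apply_eq_self_iff: "sigma_pow n q k = q k \<longleftrightarrow> q k = 0 \<or> of_int n * k \<in> \<int>"
  by (auto simp: sigma_pow_apply zeta_eq_1_iff[symmetric])

lemma sigma_pow_apply_eq_iff:
  "sigma_pow k f x = sigma_pow l g x \<longleftrightarrow> sigma_pow (k - l) f x = g x"
proof -
  have "zeta (of_int k * x) = zeta (of_int (k - l) * x) * zeta (of_int l * x)"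
    by (simp add: zeta_add[symmetric] algebra_simps)
  then show ?thesis by (simp add: sigma_pow_apply mult.assoc[symmetric])
qed

lemma trunc_sigma_pow: "trunc e (sigma_pow n q) = sigma_pow n (trunc e q)"
  by (rule ext) (simp add: trunc_def sigma_pow_apply)

lemma trunc_eq_iff: "trunc e f = trunc e g \<longleftrightarrow> (\<forall>x\<ge>e. f x = g x)"
  unfolding trunc_def fun_eq_iff by (metis (mono_tags))

lemma stokes_circle_eq_iff: "stokes_circle q = stokes_circle q' \<longleftrightarrow> (\<exists>n. q' = sigma_pow n q)"
proof
  assume "stokes_circle q = stokes_circle q'"
  moreover have "q' \<in> stokes_circle q'" unfolding stokes_circle_def by (auto intro: exI[of _ 0])
  ultimately show "\<exists>n. q' = sigma_pow n q" unfolding stokes_circle_def by auto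
next
  assume "\<exists>n. q' = sigma_pow n q"
  then obtain n where n: "q' = sigma_pow n q" by auto
  have "sigma_pow i q = sigma_pow (i - n) q'" for i
    unfolding n sigma_pow_add by simp
  then show "stokes_circle q = stokes_circle q'"
    unfolding stokes_circle_def n sigma_pow_add by (auto intro: exI[of _ "_ - n"])
qed

lemma stokes_circle_trunc_eq:
  assumes "\<forall>x\<ge>e. g x = sigma_pow n f x"
  shows "stokes_circle (trunc e f) = stokes_circle (trunc e g)"
proof -
  have "trunc e g = sigma_pow n (trunc e f)"
    unfolding trunc_sigma_pow[symmetric] trunc_eq_iff using assms by simp
  then show ?thesis using stokes_circle_eq_iff by blast
qed

lemma node_Ram_stokes_circle [simp]: "node_Ram (h, stokes_circle q) = ram q"
proof -
  have "q \<in> stokes_circle q" unfolding stokes_circle_def by (auto intro: exI[of _ 0])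
  then have "(SOME x. x \<in> stokes_circle q) \<in> stokes_circle q" by (rule someI[of "\<lambda>x. x \<in> stokes_circle q"])
  then obtain n where "(SOME x. x \<in> stokes_circle q) = sigma_pow n q" unfolding stokes_circle_def by auto
  then show ?thesis unfolding node_Ram_def by simp
qed

lemma is_expfac_coeff_pos: "is_expfac q \<Longrightarrow> q k \<noteq> 0 \<Longrightarrow> k > 0"
  by (auto simp: is_expfac_def supp_ef_def)

lemma is_expfac_finite_coeffs: "is_expfac q \<Longrightarrow> finite {k. q k \<noteq> 0}"
  by (auto simp: is_expfac_def supp_ef_def)

lemma is_expfac_diff_ef: "is_expfac f \<Longrightarrow> is_expfac g \<Longrightarrow> is_expfac (diff_ef f g)"
proof -
  assume "is_expfac f" "is_expfac g"
  moreover have "supp_ef (diff_ef f g) \<subseteq> supp_ef f \<union> supp_ef g"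
    by (auto simp: supp_ef_def diff_ef_def)
  ultimately show ?thesis unfolding is_expfac_def by (meson Un_iff finite_Un finite_subset subsetD)
qed

lemma is_expfac_trunc: "is_expfac q \<Longrightarrow> is_expfac (trunc e q)"
proof -
  assume "is_expfac q"
  moreover have "supp_ef (trunc e q) \<subseteq> supp_ef q"
    by (auto simp: supp_ef_def trunc_def)
  ultimately show ?thesis unfolding is_expfac_def by (meson finite_subset subsetD)
qed

lemma slope_eq_iff:
  assumes "is_expfac d"
  shows "slope d = h \<longleftrightarrow> (h = 0 \<and> (\<forall>k. d k = 0)) \<or> (0 < h \<and> d h \<noteq> 0 \<and> (\<forall>k>h. d k = 0))"
proof (cases "supp_ef d = {}")
  case True
  then show ?thesis by (auto simp: slope_def supp_ef_def)
next
  case False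
  let ?M = "Max (supp_ef d)"
  have fin: "finite (supp_ef d)" using assms by (simp add: is_expfac_def)
  have M: "?M \<in> supp_ef d" using fin False by simp
  then have "?M > 0" "d ?M \<noteq> 0" using assms by (auto simp: is_expfac_def supp_ef_def)
  moreover have "\<forall>k>?M. d k = 0" using Max_ge[OF fin] by (fastforce simp: supp_ef_def)
  moreover have "d h \<noteq> 0 \<Longrightarrow> h \<le> ?M" using fin by (simp add: supp_ef_def)
  moreover have "slope d = ?M" using False by (simp add: slope_def)
  ultimately show ?thesis by (metis less_le_not_le order.not_eq_order_implies_strict)
qed

lemma slope_nonneg: "is_expfac d \<Longrightarrow> slope d \<ge> 0"
  using slope_eq_iff[of d "slope d"] by auto

lemma le_slope: "is_expfac q \<Longrightarrow> q e \<noteq> 0 \<Longrightarrow> e \<le> slope q"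
  by (auto simp: slope_def is_expfac_def supp_ef_def)

lemma slope_diff_ef_iff:
  assumes "is_expfac f" "is_expfac g"
  shows "slope (diff_ef f g) = h \<longleftrightarrow> 0 \<le> h \<and> (\<forall>k>h. f k = g k) \<and> (0 < h \<longrightarrow> f h \<noteq> g h)"
proof -
  have d: "is_expfac (diff_ef f g)" using assms by (rule is_expfac_diff_ef)
  have pos: "f k \<noteq> g k \<Longrightarrow> k > 0" for k
    using is_expfac_coeff_pos[OF d] by (simp add: diff_ef_def)
  show ?thesis
  proof (cases "h = 0")
    case True
    then show ?thesis unfolding slope_eq_iff[OF d] unfolding diff_ef_def using pos by force
  next
    case False
    then show ?thesis unfolding slope_eq_iff[OF d] unfolding diff_ef_def by auto
  qed
qed

lemma slope_diff_ef_commute: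
  "is_expfac f \<Longrightarrow> is_expfac g \<Longrightarrow> slope (diff_ef f g) = slope (diff_ef g f)"
  using slope_diff_ef_iff[of f g "slope (diff_ef g f)"] slope_diff_ef_iff[of g f "slope (diff_ef g f)"]
  by metis

lemma slope_diff_ef_sigma_pow:
  "slope (diff_ef (sigma_pow k f) (sigma_pow l g)) = slope (diff_ef (sigma_pow (k - l) f) g)"
proof -
  have "supp_ef (diff_ef (sigma_pow k f) (sigma_pow l g)) = supp_ef (diff_ef (sigma_pow (k - l) f) g)"
    unfolding supp_ef_def diff_ef_def right_minus_eq sigma_pow_apply_eq_iff ..
  then show ?thesis unfolding slope_def by simp
qed

lemma ram_ge_1_and_mult_Ints:
  assumes "is_expfac q"
  shows "ram q \<ge> 1 \<and> (\<forall>k \<in> supp_ef q. of_nat (ram q) * k \<in> \<int>)"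
  unfolding ram_def
proof (rule LeastI)
  have fin: "finite (supp_ef q)" using assms by (simp add: is_expfac_def)
  define p where "p = (\<Prod>k\<in>supp_ef q. denom k)"
  have "p > 0" unfolding p_def using denom_pos by (simp add: prod_pos)
  moreover have "of_int p * k \<in> \<int>" if "k \<in> supp_ef q" for k
    unfolding of_int_mult_Ints_iff p_def using fin that by (rule dvd_prodI)
  ultimately show "nat p \<ge> 1 \<and> (\<forall>k\<in>supp_ef q. of_nat (nat p) * k \<in> \<int>)" by simp
qed

lemma ram_ge_1: "is_expfac q \<Longrightarrow> ram q \<ge> 1"
  using ram_ge_1_and_mult_Ints by blast

lemma ram_mult_Ints: "is_expfac q \<Longrightarrow> q k \<noteq> 0 \<Longrightarrow> of_nat (ram q) * k \<in> \<int>"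
  using ram_ge_1_and_mult_Ints by (auto simp: supp_ef_def)

lemma int_ram_dvd:
  assumes q: "is_expfac q" and n: "\<And>k. q k \<noteq> 0 \<Longrightarrow> of_int n * k \<in> \<int>"
  shows "int (ram q) dvd n"
proof (cases "n = 0")
  case False
  define g where "g = gcd (int (ram q)) n"
  obtain u v where uv: "u * int (ram q) + v * n = g" unfolding g_def using bezout_int by blast
  have gpos: "g > 0" using False unfolding g_def by simp
  have "of_int g * k \<in> \<int>" if k: "k \<in> supp_ef q" for k
  proof -
    have Ints: "of_nat (ram q) * k \<in> \<int>" "of_int n * k \<in> \<int>"
      using k ram_mult_Ints[OF q] n by (auto simp: supp_ef_def)
    have "of_int g * k = of_int u * (of_nat (ram q) * k) + of_int v * (of_int n * k)"
      unfolding uv[symmetric] by (simp add: algebra_simps)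
    also have "\<dots> \<in> \<int>"
      by (rule Ints_add[OF Ints_mult[OF Ints_of_int Ints(1)] Ints_mult[OF Ints_of_int Ints(2)]])
    finally show ?thesis .
  qed
  then have "ram q \<le> nat g" unfolding ram_def using gpos by (intro Least_le) simp
  moreover have "g \<le> int (ram q)"
    unfolding g_def using ram_ge_1[OF q] by (simp add: zdvd_imp_le)
  ultimately have "g = int (ram q)" using gpos by linarith
  then show ?thesis unfolding g_def by (metis gcd_dvd2)
qed simp

lemma sigma_pow_mod:
  assumes "R > 0" and "\<And>x. f x \<noteq> 0 \<Longrightarrow> of_int R * x \<in> \<int>"
  shows "sigma_pow k f = sigma_pow (k mod R) f"
proof (rule ext)
  fix x
  show "sigma_pow k f x = sigma_pow (k mod R) f x"
  proof (cases "f x = 0")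
    case False
    have "(of_int k :: rat) = of_int (k div R) * of_int R + of_int (k mod R)"
      by (metis div_mult_mod_eq of_int_add of_int_mult)
    then have "of_int k * x - of_int (k mod R) * x = of_int (k div R) * (of_int R * x)"
      by (simp add: algebra_simps)
    also have "\<dots> \<in> \<int>" by (rule Ints_mult[OF Ints_of_int assms(2)[OF False]])
    finally show ?thesis unfolding sigma_pow_apply using zeta_eq_iff by simp
  qed (simp add: sigma_pow_apply)
qed

section \<open>Levels and admissible exponents\<close>

lemma mem_Levels_iff:
  assumes q: "is_expfac q" and l: "l > 0"
  shows "l \<in> Levels q \<longleftrightarrow>
    (\<exists>n. (\<forall>x>l. q x = 0 \<or> of_int n * x \<in> \<int>) \<and> q l \<noteq> 0 \<and> of_int n * l \<notin> \<int>)"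
proof -
  have fixed: "q x = sigma_pow n q x \<longleftrightarrow> q x = 0 \<or> of_int n * x \<in> \<int>" for n x
    using sigma_pow_apply_eq_self_iff[of n q x] by auto
  have "slope (diff_ef q (sigma_pow n q)) = l \<longleftrightarrow>
    (\<forall>x>l. q x = 0 \<or> of_int n * x \<in> \<int>) \<and> q l \<noteq> 0 \<and> of_int n * l \<notin> \<int>" for n
    using slope_diff_ef_iff[of q "sigma_pow n q" l] q l by (simp add: fixed)
  moreover have "l \<in> Levels q \<longleftrightarrow> (\<exists>n. slope (diff_ef q (sigma_pow n q)) = l)"
    using l unfolding Levels_def by auto
  ultimately show ?thesis by simp
qed

lemma Levels_pos:
  assumes q: "is_expfac q" and "l \<in> Levels q"
  shows "l > 0"
proof -
  obtain n where "l = slope (diff_ef q (sigma_pow n q))" "l \<noteq> 0"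
    using assms(2) unfolding Levels_def by auto
  then show ?thesis using slope_nonneg[OF is_expfac_diff_ef[OF q, of "sigma_pow n q"]] q by simp
qed

lemma Levels_coeff_nonzero: "is_expfac q \<Longrightarrow> l \<in> Levels q \<Longrightarrow> q l \<noteq> 0"
  using mem_Levels_iff Levels_pos by blast

lemma finite_Levels: "is_expfac q \<Longrightarrow> finite (Levels q)"
  by (rule rev_finite_subset[OF is_expfac_finite_coeffs]) (auto dest: Levels_coeff_nonzero)

lemma Levels_cong_above:
  assumes "is_expfac q" "is_expfac q'" "l > 0" "\<forall>x\<ge>l. q x = q' x"
  shows "l \<in> Levels q \<longleftrightarrow> l \<in> Levels q'"
  unfolding mem_Levels_iff[OF assms(1,3)] mem_Levels_iff[OF assms(2,3)] using assms(4) by auto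

lemma admissible_exps_pos: "e \<in> admissible_exps L \<Longrightarrow> e > 0"
  unfolding admissible_exps_def by auto

lemma level_ram_pos: "finite L \<Longrightarrow> level_ram L k > 0"
proof -
  assume "finite L"
  moreover have "0 \<notin> denom ` {l \<in> L. k \<le> l}" using denom_pos by (metis imageE less_irrefl)
  ultimately have "Lcm (denom ` {l \<in> L. k \<le> l}) \<noteq> 0" by (simp add: Lcm_0_iff)
  moreover have "Lcm (denom ` {l \<in> L. k \<le> l}) \<ge> 0" by simp
  ultimately show ?thesis unfolding level_ram_def by linarith
qed

lemma level_ram_dvd_iff: "level_ram L k dvd n \<longleftrightarrow> (\<forall>l\<in>L. k \<le> l \<longrightarrow> denom l dvd n)"
  unfolding level_ram_def by (auto simp: Lcm_dvd_iff)

lemma admissible_exps_mult_Ints: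
  assumes "e \<in> admissible_exps L" and "\<And>l. l \<in> L \<Longrightarrow> e \<le> l \<Longrightarrow> of_int n * l \<in> \<int>"
  shows "of_int n * e \<in> \<int>"
  using assms(1) unfolding admissible_exps_def
proof (elim UnE CollectE exE conjE UN_E)
  fix L0 N assume L0: "L0 \<in> L" and e: "0 < e" "e \<le> L0" "e = of_nat N / of_int (level_ram L L0)"
  have "level_ram L L0 dvd n"
    unfolding level_ram_dvd_iff using assms(2) e(2) by (auto simp: of_int_mult_Ints_iff[symmetric])
  then obtain u where u: "n = level_ram L L0 * u" by (elim dvdE)
  have "level_ram L L0 \<noteq> 0" using e by auto
  then have "of_int n * e = of_int (u * int N)" unfolding u e(3) by simp
  then show ?thesis by simp
qed simp

lemma level_in_admissible_exps:
  assumes "finite L" "l \<in> L" "l > 0"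
  shows "l \<in> admissible_exps L"
proof -
  let ?t = "level_ram L l"
  have t: "?t > 0" using level_ram_pos[OF assms(1)] .
  have "of_int ?t * l \<in> \<int>"
    unfolding of_int_mult_Ints_iff using assms(2) level_ram_dvd_iff[of L l ?t] by auto
  then obtain z where z: "of_int ?t * l = of_int z" by (auto elim: Ints_cases)
  then have "z > 0" using t assms(3) by (metis of_int_0_less_iff zero_less_mult_iff)
  then have "l = of_nat (nat z) / of_int ?t" using z t by (simp add: field_simps)
  then show ?thesis unfolding admissible_exps_def using assms(2,3) by blast
qed

lemma admissible_exps_cong:
  assumes "e \<in> admissible_exps L"
    and "\<And>l. e < l \<Longrightarrow> l \<in> L \<longleftrightarrow> l \<in> L'" and "e \<in> L \<Longrightarrow> e \<in> L'"
  shows "e \<in> admissible_exps L'"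
  using assms(1) unfolding admissible_exps_def
proof (elim UnE CollectE exE conjE UN_E)
  fix L0 N assume L0: "L0 \<in> L" and e: "0 < e" "e \<le> L0" "e = of_nat N / of_int (level_ram L L0)"
  have same: "l \<in> L \<longleftrightarrow> l \<in> L'" if "L0 \<le> l" for l
  proof (cases "e < l")
    case False
    then have "l = L0" "L0 = e" using e(2) that by auto
    then show ?thesis using L0 assms(3) by auto
  qed (rule assms(2))
  then have "{l \<in> L. L0 \<le> l} = {l \<in> L'. L0 \<le> l}" by blast
  then have "level_ram L L0 = level_ram L' L0" "L0 \<in> L'"
    unfolding level_ram_def using same[of L0] L0 by simp_all
  then show "e \<in> {k. \<exists>n>0. k = of_nat n} \<union>
      (\<Union>ki\<in>L'. {k. 0 < k \<and> k \<le> ki \<and> (\<exists>n. k = of_nat n / of_int (level_ram L' ki))})"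
    using e by auto
qed auto

lemma admissible_cong_above:
  assumes "is_expfac q" and "is_expfac q'" and "\<forall>y\<ge>x. q y = q' y"
  shows "x \<in> admissible_exps (Levels q) \<longleftrightarrow> x \<in> admissible_exps (Levels q')"
proof -
  have "x \<in> admissible_exps (Levels q')"
    if A: "x \<in> admissible_exps (Levels q)" and B: "\<forall>y\<ge>x. q y = q' y" "is_expfac q" "is_expfac q'"
    for q q'
  proof (rule admissible_exps_cong[OF A])
    have "l \<in> Levels q \<longleftrightarrow> l \<in> Levels q'" if "x \<le> l" for l
      using Levels_cong_above[of q q' l] admissible_exps_pos[OF A] B that by simp
    then show "\<And>l. x < l \<Longrightarrow> l \<in> Levels q \<longleftrightarrow> l \<in> Levels q'" "x \<in> Levels q \<Longrightarrow> x \<in> Levels q'"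
      by auto
  qed
  then show ?thesis using assms by (metis (full_types))
qed

lemma admissible_cong_strictly_above:
  assumes q: "is_expfac q" and q': "is_expfac q'" and agree: "\<forall>x>e. q x = q' x"
    and e: "e \<in> admissible_exps (Levels q)" and "e \<in> Levels q \<Longrightarrow> e \<in> Levels q'"
  shows "e \<in> admissible_exps (Levels q')"
proof (rule admissible_exps_cong[OF e _ assms(5)])
  fix l assume "e < l"
  then show "l \<in> Levels q \<longleftrightarrow> l \<in> Levels q'"
    using Levels_cong_above[OF q q'] agree admissible_exps_pos[OF e] by simp
qed

lemma Levels_if_agree_strictly_above:
  assumes q: "is_expfac q" and q': "is_expfac q'" and agree: "\<forall>x>h. q x = q' x"
    and L: "h \<in> Levels q" and A': "h \<in> admissible_exps (Levels q')"
  shows "h \<in> Levels q'"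
proof (rule ccontr)
  assume nL': "h \<notin> Levels q'"
  obtain n where n: "\<forall>x>h. q x = 0 \<or> of_int n * x \<in> \<int>" "of_int n * h \<notin> \<int>"
    using L mem_Levels_iff[OF q Levels_pos[OF q L]] by blast
  have "of_int n * h \<in> \<int>"
  proof (rule admissible_exps_mult_Ints[OF A'])
    fix l assume "l \<in> Levels q'" "h \<le> l"
    then have "h < l" "q l \<noteq> 0"
      using nL' agree Levels_coeff_nonzero[OF q'] by (auto simp: order_le_less)
    then show "of_int n * l \<in> \<int>" using n(1) by auto
  qed
  then show False using n(2) by simp
qed

lemma level_ram_mult_not_Ints:
  assumes fin: "finite L" and e: "e > 0" and na: "e \<notin> admissible_exps L"
  shows "of_int (level_ram L e) * e \<notin> \<int>"
proof
  let ?t = "level_ram L e"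
  assume "of_int ?t * e \<in> \<int>"
  then obtain z where z: "of_int ?t * e = of_int z" by (auto elim: Ints_cases)
  have t: "?t > 0" using level_ram_pos[OF fin] .
  then have "z > 0" using z e by (metis of_int_0_less_iff zero_less_mult_iff)
  then have ez: "e = of_nat (nat z) / of_int ?t" using z t by (simp add: field_simps)
  define S where "S = {l \<in> L. e \<le> l}"
  show False
  proof (cases "S = {}")
    case True
    then have "?t = 1" unfolding level_ram_def S_def by (simp only: image_empty Lcm_empty)
    then have "e = of_nat (nat z)" "nat z > 0" using ez \<open>z > 0\<close> by simp_all
    then show False using na unfolding admissible_exps_def by blast
  next
    case False
    have "finite S" unfolding S_def using fin by simp
    then have "Min S \<in> S" and min: "\<And>l. l \<in> S \<Longrightarrow> Min S \<le> l" using False by simp_all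
    then have L0: "Min S \<in> L" "e \<le> Min S" unfolding S_def by simp_all
    have "{l \<in> L. Min S \<le> l} = S"
      using min L0(2) unfolding S_def by (blast intro: order_trans)
    then have "level_ram L (Min S) = ?t" unfolding level_ram_def S_def by simp
    then have "e \<in> {k. 0 < k \<and> k \<le> Min S \<and> (\<exists>n::nat. k = of_nat n / of_int (level_ram L (Min S)))}"
      using e ez L0(2) by auto
    then show False using na L0(1) unfolding admissible_exps_def by blast
  qed
qed

lemma slope_sub_sigma_pow_level_ram:
  assumes fin: "finite L" and f: "is_expfac f" and fe: "f e \<noteq> 0" and na: "e \<notin> admissible_exps L"
    and above: "\<And>x. e < x \<Longrightarrow> f x \<noteq> 0 \<Longrightarrow> x \<in> admissible_exps L"
  shows "slope (diff_ef f (sigma_pow (level_ram L e) f)) = e"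
proof -
  let ?t = "level_ram L e"
  have e: "e > 0" using is_expfac_coeff_pos[OF f fe] .
  have Ints: "of_int ?t * x \<in> \<int>" if "e < x" "f x \<noteq> 0" for x
  proof (rule admissible_exps_mult_Ints[OF above[OF that]])
    fix l assume "l \<in> L" "x \<le> l"
    then show "of_int ?t * l \<in> \<int>"
      using that(1) level_ram_dvd_iff[of L e ?t] by (simp add: of_int_mult_Ints_iff)
  qed
  have "\<forall>x>e. f x = sigma_pow ?t f x"
  proof (intro allI impI)
    fix x assume "e < x"
    then show "f x = sigma_pow ?t f x"
      using Ints sigma_pow_apply_eq_self_iff[of ?t f x] by (cases "f x = 0") auto
  qed
  moreover have "f e \<noteq> sigma_pow ?t f e"
    using sigma_pow_apply_eq_self_iff[of ?t f e] fe level_ram_mult_not_Ints[OF fin e na] by auto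
  ultimately show ?thesis using slope_diff_ef_iff[OF f, of "sigma_pow ?t f" e] f e by simp
qed

lemma exists_top_coeff_outside:
  assumes "is_expfac f" "f e \<noteq> 0" "e \<notin> A"
  obtains e0 where "f e0 \<noteq> 0" "e0 \<notin> A" "\<And>x. e0 < x \<Longrightarrow> f x \<noteq> 0 \<Longrightarrow> x \<in> A"
proof -
  define S where "S = {x. f x \<noteq> 0 \<and> x \<notin> A}"
  have "finite S" unfolding S_def using is_expfac_finite_coeffs[OF assms(1)] by (rule rev_finite_subset) auto
  moreover have "e \<in> S" unfolding S_def using assms by simp
  ultimately have top: "Max S \<in> S" and max: "\<And>x. x \<in> S \<Longrightarrow> x \<le> Max S"
    using Max_in Max_ge by blast+
  show ?thesis
  proof (rule that)
    show "f (Max S) \<noteq> 0" "Max S \<notin> A" using top unfolding S_def by auto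
    fix x assume "Max S < x" "f x \<noteq> 0"
    then show "x \<in> A" using max[of x] unfolding S_def by force
  qed
qed

lemma exists_slope_sub_sigma_pow_level_ram:
  assumes "finite L" "is_expfac f" "f e \<noteq> 0" "e \<notin> admissible_exps L"
  obtains e0 where "e0 > 0" "e0 \<notin> admissible_exps L"
    "slope (diff_ef f (sigma_pow (level_ram L e0) f)) = e0"
proof -
  obtain e0 where "f e0 \<noteq> 0" "e0 \<notin> admissible_exps L"
      "\<And>x. e0 < x \<Longrightarrow> f x \<noteq> 0 \<Longrightarrow> x \<in> admissible_exps L"
    using exists_top_coeff_outside[OF assms(2-4)] by blast
  then show ?thesis
    using that slope_sub_sigma_pow_level_ram[OF assms(1,2)] is_expfac_coeff_pos[OF assms(2)] by blast
qed

lemma coeff_nonzero_admissible: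
  assumes q: "is_expfac q" and "q e \<noteq> 0"
  shows "e \<in> admissible_exps (Levels q)"
proof (rule ccontr)
  \<comment> \<open>the largest non-admissible exponent of the support would be a level\<close>
  assume "e \<notin> admissible_exps (Levels q)"
  then obtain e0 where e0: "e0 > 0" "e0 \<notin> admissible_exps (Levels q)"
    "slope (diff_ef q (sigma_pow (level_ram (Levels q) e0) q)) = e0"
    using exists_slope_sub_sigma_pow_level_ram[OF finite_Levels[OF q] q assms(2)] by blast
  then have "e0 \<in> Levels q"
    unfolding Levels_def by (metis (mono_tags, lifting) CollectI DiffI less_irrefl singletonD)
  then show False using level_in_admissible_exps[OF finite_Levels[OF q]] e0(1,2) by blast
qed

lemma ram_mult_admissible_Ints:
  assumes q: "is_expfac q" and e: "e \<in> admissible_exps (Levels q)"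
  shows "of_nat (ram q) * e \<in> \<int>"
  using admissible_exps_mult_Ints[OF e, of "int (ram q)"] ram_mult_Ints[OF q] Levels_coeff_nonzero[OF q]
  by simp

lemma level_ram_dvd_ram: "is_expfac q \<Longrightarrow> level_ram (Levels q) e dvd int (ram q)"
  unfolding level_ram_dvd_iff
  by (metis Levels_coeff_nonzero of_int_mult_Ints_iff of_int_of_nat_eq ram_mult_Ints)

section \<open>The fission tree\<close>

locale compatible_pit =
  fixes Q :: pit
  assumes pit: "pointed_irregular_type Q" and compat: "compatible Q"
begin

abbreviation factor :: "nat \<Rightarrow> expfac" where
  "factor i \<equiv> snd (Q ! i)"

abbreviation adm :: "nat \<Rightarrow> rat set" where
  "adm i \<equiv> admissible_exps (Levels (factor i))"

definition node_at :: "rat \<Rightarrow> nat \<Rightarrow> node" where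
  "node_at e i = (e, stokes_circle (trunc e (factor i)))"

text \<open>In the notation of the paper, \<open>h = h'\<^sup>-\<close>: nodes of height \<open>h\<close> have their parents at
  height \<open>h'\<close>.\<close>

definition consecutive_heights :: "rat \<Rightarrow> rat \<Rightarrow> bool" where
  "consecutive_heights h h' \<longleftrightarrow>
     h \<in> AQ Q \<and> h' \<in> AQ Q \<and> h < h' \<and> (\<forall>k\<in>AQ Q. \<not> (h < k \<and> k < h'))"

lemma is_expfac_factor: "i < length Q \<Longrightarrow> is_expfac (factor i)"
  using pit unfolding pointed_irregular_type_def by blast

lemma stokes_circle_trunc_eq_iff:
  assumes "i < length Q" "j < length Q" "e > 0"
  shows "stokes_circle (trunc e (factor i)) = stokes_circle (trunc e (factor j)) \<longleftrightarrow>
    trunc e (factor i) = trunc e (factor j)"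
  using compat assms unfolding compatible_def by metis

lemma node_at_eq_iff:
  "i < length Q \<Longrightarrow> j < length Q \<Longrightarrow> e > 0 \<Longrightarrow>
    node_at e i = node_at e j \<longleftrightarrow> trunc e (factor i) = trunc e (factor j)"
  unfolding node_at_def using stokes_circle_trunc_eq_iff by simp

lemma cfg_r_pos: "cfg_r Q > 0"
proof -
  have "0 \<notin> set (map (\<lambda>p. ram (snd p)) Q)"
  proof
    assume "0 \<in> set (map (\<lambda>p. ram (snd p)) Q)"
    then obtain i where "i < length Q" "ram (factor i) = 0" by (auto simp: in_set_conv_nth)
    then show False using ram_ge_1[OF is_expfac_factor] by fastforce
  qed
  then have "cfg_r Q \<noteq> 0" unfolding cfg_r_def using Lcm_0_iff_nat[of "set (map (\<lambda>p. ram (snd p)) Q)"] by blast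
  then show ?thesis by simp
qed

lemma ram_dvd_cfg_r: "i < length Q \<Longrightarrow> ram (factor i) dvd cfg_r Q"
  unfolding cfg_r_def by (rule dvd_Lcm) simp

lemma coeff_le_cfg_K:
  assumes "i < length Q" "factor i e \<noteq> 0"
  shows "e \<le> cfg_K Q"
proof -
  have "slope (factor i) \<le> cfg_K Q"
    unfolding cfg_K_def using assms(1) by (intro Max_ge) auto
  then show ?thesis using le_slope[OF is_expfac_factor[OF assms(1)] assms(2)] by simp
qed

lemma cfg_r_mult_admissible_Ints:
  assumes i: "i < length Q" and e: "e \<in> adm i"
  shows "of_nat (cfg_r Q) * e \<in> \<int>"
proof -
  obtain u where u: "cfg_r Q = ram (factor i) * u" using ram_dvd_cfg_r[OF i] by (elim dvdE)
  have "of_nat (cfg_r Q) * e = of_nat u * (of_nat (ram (factor i)) * e)"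
    unfolding u by (simp add: algebra_simps)
  also have "\<dots> \<in> \<int>" by (intro Ints_mult Ints_of_nat ram_mult_admissible_Ints[OF is_expfac_factor[OF i] e])
  finally show ?thesis .
qed

lemma mem_AQ_iff: "e \<in> AQ Q \<longleftrightarrow> (\<exists>i<length Q. e \<in> adm i)"
  unfolding AQ_def by auto

lemma AQ_pos: "e \<in> AQ Q \<Longrightarrow> e > 0"
  using admissible_exps_pos mem_AQ_iff by blast

lemma AQ_cfg_r_mult_Ints: "e \<in> AQ Q \<Longrightarrow> of_nat (cfg_r Q) * e \<in> \<int>"
  using cfg_r_mult_admissible_Ints mem_AQ_iff by blast

lemma coeff_nonzero_AQ: "i < length Q \<Longrightarrow> factor i e \<noteq> 0 \<Longrightarrow> e \<in> AQ Q"
  using coeff_nonzero_admissible[OF is_expfac_factor] mem_AQ_iff by blast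

lemma grid_point_of_Ints:
  fixes e :: rat
  assumes "of_nat (cfg_r Q) * e \<in> \<int>" "e > 0"
  obtains j :: nat where "j \<ge> 1" "e = of_nat j / of_nat (cfg_r Q)"
proof -
  obtain z where z: "of_nat (cfg_r Q) * e = of_int z" using assms(1) by (elim Ints_cases)
  have "of_nat (cfg_r Q) * e > 0" using assms(2) cfg_r_pos by (simp add: zero_less_mult_iff)
  then have "z > 0" unfolding z by simp
  moreover have "e = of_int z / of_nat (cfg_r Q)" using z cfg_r_pos by (simp add: field_simps)
  ultimately show ?thesis using that[of "nat z"] by simp
qed

lemma grid_index_of_admissible:
  assumes "i < length Q" "e \<in> adm i" "e \<le> cfg_K Q"
  obtains j where "1 \<le> j" "j \<le> cfg_s Q" "e = of_nat j / of_nat (cfg_r Q)"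
proof -
  obtain j where j: "j \<ge> 1" "e = of_nat j / of_nat (cfg_r Q)"
    using grid_point_of_Ints cfg_r_mult_admissible_Ints[OF assms(1,2)] admissible_exps_pos[OF assms(2)]
    by blast
  then have "of_nat j = of_nat (cfg_r Q) * e" using cfg_r_pos by simp
  also have "\<dots> \<le> of_nat (cfg_r Q) * cfg_K Q" using assms(3) by (simp add: mult_left_mono)
  finally have "of_nat j \<le> of_nat (cfg_r Q) * cfg_K Q" .
  then have "j \<le> cfg_s Q" unfolding cfg_s_def by (simp add: le_nat_iff le_floor_iff)
  then show ?thesis using that j by blast
qed

lemma grid_point_bounds:
  assumes "1 \<le> j" "j \<le> cfg_s Q"
  shows "0 < (of_nat j / of_nat (cfg_r Q) :: rat)" "(of_nat j / of_nat (cfg_r Q) :: rat) \<le> cfg_K Q"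
proof -
  have "int j \<le> \<lfloor>of_nat (cfg_r Q) * cfg_K Q\<rfloor>" using assms unfolding cfg_s_def by linarith
  then show "(of_nat j / of_nat (cfg_r Q) :: rat) \<le> cfg_K Q"
    using cfg_r_pos by (simp add: le_floor_iff field_simps)
  show "0 < (of_nat j / of_nat (cfg_r Q) :: rat)" using assms cfg_r_pos by simp
qed

lemma AQ_successor:
  assumes h: "h \<in> AQ Q"
  obtains h' where "consecutive_heights h h'"
proof -
  obtain i0 where i0: "i0 < length Q" using h mem_AQ_iff by blast
  define n0 :: nat where "n0 = nat \<lfloor>h\<rfloor> + 1"
  have "\<lfloor>h\<rfloor> \<ge> 0" using AQ_pos[OF h] by simp
  then have "(of_nat n0 :: rat) = of_int (\<lfloor>h\<rfloor> + 1)" unfolding n0_def by simp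
  then have n0h: "h < of_nat n0" using floor_correct[of h] by simp
  have "n0 > 0" unfolding n0_def by simp
  then have "(of_nat n0 :: rat) \<in> adm i0" unfolding admissible_exps_def by blast
  then have "(of_nat n0 :: rat) \<in> AQ Q" using i0 mem_AQ_iff by blast
  define X where "X = {j::nat. of_nat j / of_nat (cfg_r Q) \<in> AQ Q \<and> h < of_nat j / of_nat (cfg_r Q)}"
  have "cfg_r Q * n0 \<in> X" unfolding X_def using \<open>of_nat n0 \<in> AQ Q\<close> n0h cfg_r_pos by simp
  then have j0: "(LEAST j. j \<in> X) \<in> X" by (rule LeastI)
  define h' where "h' = (of_nat (LEAST j. j \<in> X) / of_nat (cfg_r Q) :: rat)"
  have "\<not> (h < k \<and> k < h')" if k: "k \<in> AQ Q" for k
  proof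
    assume hk: "h < k \<and> k < h'"
    obtain j1 where j1: "j1 \<ge> 1" "k = of_nat j1 / of_nat (cfg_r Q)"
      by (rule grid_point_of_Ints[OF AQ_cfg_r_mult_Ints[OF k] AQ_pos[OF k]])
    then have "j1 \<in> X" unfolding X_def using k hk by simp
    then have "(LEAST j. j \<in> X) \<le> j1" by (rule Least_le)
    then have "h' \<le> k" unfolding h'_def j1(2) using cfg_r_pos by (simp add: divide_right_mono)
    then show False using hk by simp
  qed
  then have "consecutive_heights h h'"
    unfolding consecutive_heights_def using h j0 unfolding X_def h'_def by simp
  then show ?thesis by (rule that)
qed

lemma mandatory_node_at_iff:
  assumes i: "i < length Q" and e: "e > 0"
  shows "mandatory_node Q (node_at e i) \<longleftrightarrow> e \<in> Levels (factor i)"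
proof
  assume "mandatory_node Q (node_at e i)"
  then obtain i' where i': "i' < length Q" "node_at e i = node_at e i'" "e \<in> Levels (factor i')"
    unfolding mandatory_node_def node_at_def by auto
  then have "\<forall>x\<ge>e. factor i x = factor i' x" using node_at_eq_iff[OF i i'(1) e] trunc_eq_iff by simp
  then show "e \<in> Levels (factor i)"
    using Levels_cong_above[OF is_expfac_factor[OF i] is_expfac_factor[OF i'(1)] e] i'(3) by simp
next
  assume "e \<in> Levels (factor i)"
  then show "mandatory_node Q (node_at e i)" unfolding mandatory_node_def node_at_def using i by auto
qed

lemma node_at_in_A_flat:
  "i < length Q \<Longrightarrow> e \<in> adm i \<Longrightarrow> e \<le> cfg_K Q \<Longrightarrow> node_at e i \<in> A_flat Q"
  unfolding A_flat_def admissible_node_def node_at_def by auto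

lemma is_parent_iff:
  "is_parent Q v p \<longleftrightarrow>
    (\<exists>i<length Q. \<exists>h h'. consecutive_heights h h' \<and> v = node_at h i \<and> p = node_at h' i)"
  unfolding is_parent_def consecutive_heights_def node_at_def by blast

lemma node_N_node_at:
  assumes "consecutive_heights h h'"
  shows "node_N Q (node_at h' i) =
    nat (lcm (int (ram (trunc h' (factor i)))) (denom h) div int (ram (trunc h' (factor i))))"
proof -
  have "children_height Q (node_at h' i) = h"
    unfolding children_height_def node_at_def fst_conv
    using assms unfolding consecutive_heights_def by (intro Greatest_equality) (auto simp: not_le)
  then show ?thesis unfolding node_N_def by (simp add: node_at_def)
qed

text \<open>
  The rotations fixing the coefficients of \<open>q\<^sub>i\<close> from height \<open>h'\<close> on, i.e. fixing the node
  \<open>p = \<langle>\<tau>\<^bsub>h'\<^esub> q\<^sub>i\<rangle>\<close>, are the multiples of \<open>Ram(p)\<close>; at the child height \<open>h\<close> they act exactly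
  through the \<open>N\<^sub>p\<close>-th roots of unity.
\<close>
lemma rotation_root_of_unity:
  assumes h: "consecutive_heights h h'" and i: "i < length Q"
    and Ints: "\<And>x. h' \<le> x \<Longrightarrow> factor i x \<noteq> 0 \<Longrightarrow> of_int n * x \<in> \<int>"
  shows "zeta (of_int n * h) ^ node_N Q (node_at h' i) = 1"
proof -
  have fi: "is_expfac (factor i)" using is_expfac_factor[OF i] .
  define R where "R = int (ram (trunc h' (factor i)))"
  have R: "R > 0" unfolding R_def using ram_ge_1[OF is_expfac_trunc[OF fi, of h']] by simp
  have "R dvd n"
    unfolding R_def
  proof (rule int_ram_dvd[OF is_expfac_trunc[OF fi]])
    fix x assume "trunc h' (factor i) x \<noteq> 0"
    then show "of_int n * x \<in> \<int>" using Ints by (auto simp: trunc_def split: if_splits)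
  qed
  then obtain m where "n = m * R" by (metis dvd_def mult.commute)
  then have "zeta (of_int n * h) \<in> range (\<lambda>m::int. zeta (of_int (m * R) * h))" by blast
  then show ?thesis
    unfolding node_N_node_at[OF h] R_def[symmetric] zeta_multiples_eq_roots_of_unity[OF R] by simp
qed

lemma root_of_unity_rotation:
  assumes h: "consecutive_heights h h'" and i: "i < length Q" and w: "w ^ node_N Q (node_at h' i) = 1"
  obtains l where "zeta (of_int l * h) = w" "\<And>x. h' \<le> x \<Longrightarrow> factor i x \<noteq> 0 \<Longrightarrow> of_int l * x \<in> \<int>"
proof -
  have fi: "is_expfac (factor i)" using is_expfac_factor[OF i] .
  define R where "R = int (ram (trunc h' (factor i)))"
  have R: "R > 0" unfolding R_def using ram_ge_1[OF is_expfac_trunc[OF fi, of h']] by simp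
  have "w \<in> range (\<lambda>m::int. zeta (of_int (m * R) * h))"
    unfolding zeta_multiples_eq_roots_of_unity[OF R] using w unfolding node_N_node_at[OF h] R_def by simp
  then obtain m where m: "zeta (of_int (m * R) * h) = w" by auto
  have Ints: "of_int (m * R) * x \<in> \<int>" if "h' \<le> x" "factor i x \<noteq> 0" for x
  proof -
    have "trunc h' (factor i) x \<noteq> 0" using that by (simp add: trunc_def)
    then have "of_int R * x \<in> \<int>" using ram_mult_Ints[OF is_expfac_trunc[OF fi]] unfolding R_def by simp
    then show ?thesis by (simp add: Ints_mult mult.assoc)
  qed
  show ?thesis by (rule that[OF m Ints])
qed

lemma common_parent_siblings:
  assumes uw: "u \<noteq> w" and "is_parent Q u p" "is_parent Q w p"
  obtains i j h h' where "i < length Q" "j < length Q" "consecutive_heights h h'"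
    "u = node_at h i" "w = node_at h j" "p = node_at h' i"
    "trunc h' (factor i) = trunc h' (factor j)" "trunc h (factor i) \<noteq> trunc h (factor j)"
proof -
  obtain i h h' where i: "i < length Q" "consecutive_heights h h'" "u = node_at h i" "p = node_at h' i"
    using assms(2) unfolding is_parent_iff by blast
  obtain j k k' where j: "j < length Q" "consecutive_heights k k'" "w = node_at k j" "p = node_at k' j"
    using assms(3) unfolding is_parent_iff by blast
  have k': "k' = h'" using i(4) j(4) by (simp add: node_at_def)
  have h'pos: "h' > 0" using i(2) AQ_pos unfolding consecutive_heights_def by blast
  have "node_at h' i = node_at h' j" using i(4) j(4) k' by simp
  then have tr': "trunc h' (factor i) = trunc h' (factor j)" using node_at_eq_iff[OF i(1) j(1) h'pos] by simp
  have k: "k = h"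
  proof (rule ccontr)
    assume "k \<noteq> h"
    then consider "k < h" | "h < k" by linarith
    then show False using i(2) j(2) unfolding k' consecutive_heights_def by cases blast+
  qed
  have hpos: "h > 0" using i(2) AQ_pos unfolding consecutive_heights_def by blast
  have "trunc h (factor i) \<noteq> trunc h (factor j)"
    using uw i(3) j(3) node_at_eq_iff[OF i(1) j(1) hpos] unfolding k by simp
  then show ?thesis using that i j tr' unfolding k k' by blast
qed

lemma siblings_agree_strictly_above:
  assumes i: "i < length Q" and j: "j < length Q" and h: "consecutive_heights h h'"
    and tr: "trunc h' (factor i) = trunc h' (factor j)" and x: "h < x"
  shows "factor i x = factor j x"
proof (cases "h' \<le> x")
  case True
  then show ?thesis using tr by (simp add: trunc_eq_iff)
next
  case False
  have "x \<notin> AQ Q" using h x False unfolding consecutive_heights_def by auto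
  then show ?thesis using coeff_nonzero_AQ[OF i] coeff_nonzero_AQ[OF j] by metis
qed

lemma slope_siblings:
  assumes i: "i < length Q" and j: "j < length Q" and h: "consecutive_heights h h'"
    and tr: "trunc h' (factor i) = trunc h' (factor j)" and ntr: "trunc h (factor i) \<noteq> trunc h (factor j)"
  shows "slope (diff_ef (factor i) (factor j)) = h"
proof -
  have agree: "\<forall>x>h. factor i x = factor j x" using siblings_agree_strictly_above[OF i j h tr] by blast
  then have "factor i h \<noteq> factor j h" using ntr unfolding trunc_eq_iff by (metis order_le_less)
  moreover have "h > 0" using h AQ_pos unfolding consecutive_heights_def by blast
  ultimately show ?thesis
    using slope_diff_ef_iff[OF is_expfac_factor[OF i] is_expfac_factor[OF j]] agree by simp
qed

section \<open>Configuration coordinates\<close>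

definition cfg_factor :: "(nat \<times> nat \<Rightarrow> complex) \<Rightarrow> nat \<Rightarrow> expfac" where
  "cfg_factor a i = snd (Q_of Q a ! i)"

lemma cfg_factor_eq:
  assumes "i < length Q"
  shows "cfg_factor a i = (\<lambda>k. \<Sum>j = 1..cfg_s Q. if k = of_nat j / of_nat (cfg_r Q) then a (i, j) else 0)"
proof -
  have i: "[0..<length Q] ! i = i" using assms by simp
  show ?thesis unfolding cfg_factor_def Q_of_def using assms by (simp only: nth_map length_upt i) simp
qed

lemma cfg_factor_grid:
  assumes "i < length Q" "1 \<le> j" "j \<le> cfg_s Q"
  shows "cfg_factor a i (of_nat j / of_nat (cfg_r Q)) = a (i, j)"
proof -
  have "(of_nat j / of_nat (cfg_r Q) :: rat) = of_nat j' / of_nat (cfg_r Q) \<longleftrightarrow> j = j'" for j'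
    using cfg_r_pos by (simp add: divide_cancel_right)
  then show ?thesis unfolding cfg_factor_eq[OF assms(1)] using assms(2,3) by (simp add: sum.delta)
qed

lemma cfg_factor_off_grid:
  "i < length Q \<Longrightarrow> (\<And>j. 1 \<le> j \<Longrightarrow> j \<le> cfg_s Q \<Longrightarrow> e \<noteq> of_nat j / of_nat (cfg_r Q)) \<Longrightarrow>
    cfg_factor a i e = 0"
  unfolding cfg_factor_eq by (auto intro!: sum.neutral)

lemma is_expfac_cfg_factor:
  assumes i: "i < length Q"
  shows "is_expfac (cfg_factor a i)"
proof -
  let ?G = "(\<lambda>j. of_nat j / of_nat (cfg_r Q) :: rat) ` {1..cfg_s Q}"
  have "supp_ef (cfg_factor a i) \<subseteq> ?G"
    using cfg_factor_off_grid[OF i] unfolding supp_ef_def by fastforce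
  moreover have "\<forall>e \<in> ?G. e > 0" using cfg_r_pos by auto
  ultimately show ?thesis unfolding is_expfac_def by (meson finite_atLeastAtMost finite_imageI finite_subset subsetD)
qed

lemma length_Q_of [simp]: "length (Q_of Q a) = length Q"
  unfolding Q_of_def by simp

lemma fst_Q_of [simp]: "i < length Q \<Longrightarrow> fst (Q_of Q a ! i) = fst (Q ! i)"
  unfolding Q_of_def by simp

lemma coeff_map_apply:
  "coeff_map Q c (i, j) = (if (i, j) \<in> cfg_index Q \<and> of_nat j / of_nat (cfg_r Q) \<in> adm i
     then c (node_at (of_nat j / of_nat (cfg_r Q)) i) else 0)"
  unfolding coeff_map_def node_at_def by simp

lemma cfg_factor_coeff_map:
  assumes i: "i < length Q"
  shows "cfg_factor (coeff_map Q c) i e = (if e \<in> adm i \<and> e \<le> cfg_K Q then c (node_at e i) else 0)"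
proof (cases "\<exists>j. 1 \<le> j \<and> j \<le> cfg_s Q \<and> e = of_nat j / of_nat (cfg_r Q)")
  case True
  then obtain j where j: "1 \<le> j" "j \<le> cfg_s Q" "e = of_nat j / of_nat (cfg_r Q)" by blast
  then have "(i, j) \<in> cfg_index Q" unfolding cfg_index_def using i by simp
  then show ?thesis
    using cfg_factor_grid[OF i j(1,2)] grid_point_bounds[OF j(1,2)]
    unfolding j(3) coeff_map_def node_at_def by simp
next
  case False
  then have "cfg_factor (coeff_map Q c) i e = 0" by (intro cfg_factor_off_grid[OF i]) blast
  moreover have "\<not> (e \<in> adm i \<and> e \<le> cfg_K Q)"
    using False grid_index_of_admissible[OF i, of e] by blast
  ultimately show ?thesis by auto
qed

lemma R_spaceD:
  assumes "c \<in> R_space Q"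
  shows "v \<notin> A_flat Q \<Longrightarrow> c v = 0"
    and "v \<in> A_flat Q \<Longrightarrow> mandatory_node Q v \<Longrightarrow> c v \<noteq> 0"
    and "u \<in> A_flat Q \<Longrightarrow> w \<in> A_flat Q \<Longrightarrow> u \<noteq> w \<Longrightarrow>
      \<not> mandatory_node Q u \<Longrightarrow> \<not> mandatory_node Q w \<Longrightarrow>
      is_parent Q u p \<Longrightarrow> is_parent Q w p \<Longrightarrow> c u \<noteq> c w"
    and "u \<in> A_flat Q \<Longrightarrow> w \<in> A_flat Q \<Longrightarrow> u \<noteq> w \<Longrightarrow>
      mandatory_node Q u \<Longrightarrow> mandatory_node Q w \<Longrightarrow>
      is_parent Q u p \<Longrightarrow> is_parent Q w p \<Longrightarrow> c u ^ node_N Q p \<noteq> c w ^ node_N Q p"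
proof -
  note D = assms[unfolded R_space_def mem_Collect_eq]
  note D1 = D[THEN conjunct1] and D2 = D[THEN conjunct2, THEN conjunct1]
    and D3 = D[THEN conjunct2, THEN conjunct2, THEN conjunct1]
    and D4 = D[THEN conjunct2, THEN conjunct2, THEN conjunct2]
  show "v \<notin> A_flat Q \<Longrightarrow> c v = 0" using D1 by blast
  show "v \<in> A_flat Q \<Longrightarrow> mandatory_node Q v \<Longrightarrow> c v \<noteq> 0" using D2 by blast
  show "u \<in> A_flat Q \<Longrightarrow> w \<in> A_flat Q \<Longrightarrow> u \<noteq> w \<Longrightarrow>
      \<not> mandatory_node Q u \<Longrightarrow> \<not> mandatory_node Q w \<Longrightarrow>
      is_parent Q u p \<Longrightarrow> is_parent Q w p \<Longrightarrow> c u \<noteq> c w" using D3 by blast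
  show "u \<in> A_flat Q \<Longrightarrow> w \<in> A_flat Q \<Longrightarrow> u \<noteq> w \<Longrightarrow>
      mandatory_node Q u \<Longrightarrow> mandatory_node Q w \<Longrightarrow>
      is_parent Q u p \<Longrightarrow> is_parent Q w p \<Longrightarrow> c u ^ node_N Q p \<noteq> c w ^ node_N Q p"
    using D4 by blast
qed

section \<open>From coefficients on nodes to points of the configuration space\<close>

lemma trunc_eq_above_slope:
  assumes i: "i < length Q" and j: "j < length Q"
    and e: "slope (diff_ef (sigma_pow n (factor i)) (factor j)) < e"
  shows "trunc e (factor i) = trunc e (factor j)"
proof -
  let ?d = "diff_ef (sigma_pow n (factor i)) (factor j)"
  have fi: "is_expfac (factor i)" and fj: "is_expfac (factor j)" using is_expfac_factor i j by auto
  then have "\<forall>x>slope ?d. sigma_pow n (factor i) x = factor j x"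
    using slope_diff_ef_iff[of "sigma_pow n (factor i)" "factor j" "slope ?d"] by simp
  then have "\<forall>x\<ge>e. factor j x = sigma_pow n (factor i) x" using e by auto
  then have "stokes_circle (trunc e (factor i)) = stokes_circle (trunc e (factor j))"
    by (rule stokes_circle_trunc_eq)
  moreover have "e > 0" using e slope_nonneg[of ?d] is_expfac_diff_ef fi fj by fastforce
  ultimately show ?thesis using stokes_circle_trunc_eq_iff[OF i j] by simp
qed

lemma rotation_Ints_above_slope:
  assumes i: "i < length Q" and j: "j < length Q"
    and x: "slope (diff_ef (sigma_pow n (factor i)) (factor j)) < x" and nz: "factor i x \<noteq> 0"
  shows "of_int n * x \<in> \<int>"
proof -
  have "sigma_pow n (factor i) x = factor j x"
    using slope_diff_ef_iff[of "sigma_pow n (factor i)" "factor j"] x is_expfac_factor[OF i]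
      is_expfac_factor[OF j] by auto
  moreover have "factor i x = factor j x"
    using trunc_eq_above_slope[OF i j x] by (simp add: trunc_eq_iff)
  ultimately show ?thesis using sigma_pow_apply_eq_self_iff[of n "factor i" x] nz by simp
qed

lemma coeff_map_agree_above_slope:
  assumes i: "i < length Q" and j: "j < length Q"
    and x: "slope (diff_ef (sigma_pow n (factor i)) (factor j)) < x"
  shows "sigma_pow n (cfg_factor (coeff_map Q c) i) x = cfg_factor (coeff_map Q c) j x"
proof -
  let ?p = "cfg_factor (coeff_map Q c)"
  have tr: "trunc x (factor i) = trunc x (factor j)" by (rule trunc_eq_above_slope[OF i j x])
  then have "x \<in> adm i \<longleftrightarrow> x \<in> adm j"
    using admissible_cong_above[OF is_expfac_factor[OF i] is_expfac_factor[OF j]] trunc_eq_iff by blast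
  moreover have "node_at x i = node_at x j" unfolding node_at_def using tr by simp
  ultimately have same: "?p i x = ?p j x" unfolding cfg_factor_coeff_map[OF i] cfg_factor_coeff_map[OF j] by simp
  have "of_int n * x \<in> \<int>" if "?p i x \<noteq> 0"
  proof (rule admissible_exps_mult_Ints)
    show "x \<in> adm i" using that unfolding cfg_factor_coeff_map[OF i] by (auto split: if_splits)
    fix l assume "l \<in> Levels (factor i)" "x \<le> l"
    then show "of_int n * l \<in> \<int>"
      using rotation_Ints_above_slope[OF i j] x Levels_coeff_nonzero[OF is_expfac_factor[OF i]] by simp
  qed
  then show ?thesis using same sigma_pow_apply_eq_self_iff[of n "?p i" x] by auto
qed

lemma coeff_map_nonzero_at_level:
  assumes c: "c \<in> R_space Q" and i: "i < length Q" and L: "h \<in> Levels (factor i)" and hK: "h \<le> cfg_K Q"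
  shows "cfg_factor (coeff_map Q c) i h \<noteq> 0"
proof -
  have hpos: "h > 0" using Levels_pos[OF is_expfac_factor[OF i] L] .
  have A: "h \<in> adm i" using level_in_admissible_exps[OF finite_Levels[OF is_expfac_factor[OF i]] L hpos] .
  have "c (node_at h i) \<noteq> 0"
    using R_spaceD(2)[OF c node_at_in_A_flat[OF i A hK]] mandatory_node_at_iff[OF i hpos] L by blast
  then show ?thesis unfolding cfg_factor_coeff_map[OF i] using A hK by simp
qed

lemma coeff_map_at_only_admissible:
  assumes c: "c \<in> R_space Q" and i: "i < length Q" and j: "j < length Q"
    and agree: "\<forall>x>h. factor i x = factor j x"
    and Ai: "h \<in> adm i" and Aj: "h \<notin> adm j" and hK: "h \<le> cfg_K Q"
  shows "cfg_factor (coeff_map Q c) i h \<noteq> 0" "cfg_factor (coeff_map Q c) j h = 0"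
proof -
  have "h \<in> Levels (factor i)"
    using admissible_cong_strictly_above[OF is_expfac_factor[OF i] is_expfac_factor[OF j] agree Ai] Aj
    by blast
  then show "cfg_factor (coeff_map Q c) i h \<noteq> 0" by (rule coeff_map_nonzero_at_level[OF c i _ hK])
  show "cfg_factor (coeff_map Q c) j h = 0" unfolding cfg_factor_coeff_map[OF j] using Aj by simp
qed

lemma coeff_map_differ_same_node:
  assumes c: "c \<in> R_space Q" and i: "i < length Q" and j: "j < length Q" and hpos: "h > 0"
    and tr: "trunc h (factor i) = trunc h (factor j)"
    and differ: "sigma_pow n (factor i) h \<noteq> factor j h"
    and Ints: "\<And>x. h < x \<Longrightarrow> factor i x \<noteq> 0 \<Longrightarrow> of_int n * x \<in> \<int>" and hK: "h \<le> cfg_K Q"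
  shows "sigma_pow n (cfg_factor (coeff_map Q c) i) h \<noteq> cfg_factor (coeff_map Q c) j h"
proof -
  let ?p = "cfg_factor (coeff_map Q c)"
  have fi: "is_expfac (factor i)" using is_expfac_factor[OF i] .
  have "factor i h = factor j h" using tr by (simp add: trunc_eq_iff)
  then have "factor i h \<noteq> 0" and nInt: "of_int n * h \<notin> \<int>"
    using differ sigma_pow_apply_eq_self_iff[of n "factor i" h] by auto
  then have "h \<in> Levels (factor i)" using mem_Levels_iff[OF fi hpos] Ints by blast
  then have "?p i h \<noteq> 0" by (rule coeff_map_nonzero_at_level[OF c i _ hK])
  moreover have "?p i h = ?p j h"
    using tr admissible_cong_above[OF fi is_expfac_factor[OF j]] node_at_eq_iff[OF i j hpos]
    unfolding cfg_factor_coeff_map[OF i] cfg_factor_coeff_map[OF j] trunc_eq_iff by auto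
  ultimately show ?thesis using nInt sigma_pow_apply_eq_self_iff[of n "?p i" h] by auto
qed

lemma coeff_map_siblings_differ:
  assumes c: "c \<in> R_space Q" and i: "i < length Q" and j: "j < length Q"
    and agree: "\<forall>x>h. factor i x = factor j x"
    and Ints: "\<And>x. h < x \<Longrightarrow> factor i x \<noteq> 0 \<Longrightarrow> of_int n * x \<in> \<int>"
    and ntr: "trunc h (factor i) \<noteq> trunc h (factor j)"
    and Ai: "h \<in> adm i" and Aj: "h \<in> adm j" and hK: "h \<le> cfg_K Q"
  shows "c (node_at h i) * zeta (of_int n * h) \<noteq> c (node_at h j)"
proof -
  have fi: "is_expfac (factor i)" and fj: "is_expfac (factor j)" using is_expfac_factor i j by auto
  have hpos: "h > 0" using admissible_exps_pos[OF Ai] .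
  obtain h' where h': "consecutive_heights h h'"
    using AQ_successor mem_AQ_iff i Ai by blast
  then have "trunc h' (factor i) = trunc h' (factor j)"
    using agree unfolding consecutive_heights_def trunc_eq_iff by auto
  then have "node_at h' j = node_at h' i" by (simp add: node_at_def)
  then have parents: "is_parent Q (node_at h i) (node_at h' i)" "is_parent Q (node_at h j) (node_at h' i)"
    unfolding is_parent_iff using i j h' by metis+
  have nodes: "node_at h i \<in> A_flat Q" "node_at h j \<in> A_flat Q" "node_at h i \<noteq> node_at h j"
    using node_at_in_A_flat[OF i Ai hK] node_at_in_A_flat[OF j Aj hK] node_at_eq_iff[OF i j hpos] ntr
    by auto
  have levels: "h \<in> Levels (factor i) \<longleftrightarrow> h \<in> Levels (factor j)"
    using Levels_if_agree_strictly_above[OF fi fj agree _ Aj]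
      Levels_if_agree_strictly_above[OF fj fi _ _ Ai] agree by auto
  show ?thesis
  proof (cases "h \<in> Levels (factor i)")
    case True
    have "zeta (of_int n * h) ^ node_N Q (node_at h' i) = 1"
      by (rule rotation_root_of_unity[OF h' i]) (use Ints h' in \<open>auto simp: consecutive_heights_def\<close>)
    moreover have "c (node_at h i) ^ node_N Q (node_at h' i) \<noteq> c (node_at h j) ^ node_N Q (node_at h' i)"
      using R_spaceD(4)[OF c nodes _ _ parents] True levels
        mandatory_node_at_iff[OF i hpos] mandatory_node_at_iff[OF j hpos] by blast
    ultimately show ?thesis by (metis mult_1_right power_mult_distrib)
  next
    case False
    then have "c (node_at h i) \<noteq> c (node_at h j)"
      using R_spaceD(3)[OF c nodes _ _ parents] levels
        mandatory_node_at_iff[OF i hpos] mandatory_node_at_iff[OF j hpos] by blast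
    moreover have "of_int n * h \<in> \<int>"
    proof (rule admissible_exps_mult_Ints[OF Ai])
      fix l assume "l \<in> Levels (factor i)" "h \<le> l"
      then show "of_int n * l \<in> \<int>"
        using False Ints Levels_coeff_nonzero[OF fi] by (cases "l = h") auto
    qed
    ultimately show ?thesis by simp
  qed
qed

text \<open>
  Condition (1) of \<open>R_space\<close> handles a node shared by both components and a node without an
  admissible partner, conditions (2) and (3) handle two sibling nodes.
\<close>

lemma coeff_map_differ_at_slope:
  assumes c: "c \<in> R_space Q" and i: "i < length Q" and j: "j < length Q"
    and h: "slope (diff_ef (sigma_pow n (factor i)) (factor j)) = h" and hpos: "h > 0"
  shows "sigma_pow n (cfg_factor (coeff_map Q c) i) h \<noteq> cfg_factor (coeff_map Q c) j h"
proof -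
  have fi: "is_expfac (factor i)" and fj: "is_expfac (factor j)" using is_expfac_factor i j by auto
  have differ: "sigma_pow n (factor i) h \<noteq> factor j h"
    using slope_diff_ef_iff[of "sigma_pow n (factor i)" "factor j" h] fi fj h hpos by simp
  have agree: "\<forall>x>h. factor i x = factor j x"
    using trunc_eq_above_slope[OF i j] h by (auto simp: trunc_eq_iff)
  have Ints: "\<And>x. h < x \<Longrightarrow> factor i x \<noteq> 0 \<Longrightarrow> of_int n * x \<in> \<int>"
    using rotation_Ints_above_slope[OF i j] h by blast
  have "factor i h \<noteq> 0 \<or> factor j h \<noteq> 0" using differ by (auto simp: sigma_pow_apply)
  then have hK: "h \<le> cfg_K Q" using coeff_le_cfg_K[OF i] coeff_le_cfg_K[OF j] by blast
  consider (same) "trunc h (factor i) = trunc h (factor j)"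
    | (only_i) "h \<in> adm i" "h \<notin> adm j"
    | (only_j) "h \<notin> adm i" "h \<in> adm j"
    | (siblings) "trunc h (factor i) \<noteq> trunc h (factor j)" "h \<in> adm i" "h \<in> adm j"
    | (neither) "h \<notin> adm i" "h \<notin> adm j"
    by blast
  then show ?thesis
  proof cases
    case same
    then show ?thesis by (rule coeff_map_differ_same_node[OF c i j hpos _ differ Ints hK])
  next
    case only_i
    then show ?thesis
      using coeff_map_at_only_admissible[OF c i j agree _ _ hK] by (simp add: sigma_pow_apply)
  next
    case only_j
    have "\<forall>x>h. factor j x = factor i x" using agree by simp
    then show ?thesis
      using only_j coeff_map_at_only_admissible[OF c j i _ _ _ hK] by (simp add: sigma_pow_apply)
  next
    case siblings
    then show ?thesis
      using coeff_map_siblings_differ[OF c i j agree Ints] hK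
      unfolding cfg_factor_coeff_map[OF i] cfg_factor_coeff_map[OF j] by (simp add: sigma_pow_apply)
  next
    case neither
    then have "factor i h = 0" "factor j h = 0" using coeff_nonzero_admissible fi fj by blast+
    then show ?thesis using differ by (simp add: sigma_pow_apply)
  qed
qed

lemma slope_coeff_map:
  assumes c: "c \<in> R_space Q" and i: "i < length Q" and j: "j < length Q"
  shows "slope (diff_ef (sigma_pow n (cfg_factor (coeff_map Q c) i)) (cfg_factor (coeff_map Q c) j)) =
    slope (diff_ef (sigma_pow n (factor i)) (factor j))"
  using slope_diff_ef_iff[OF is_expfac_sigma_pow[THEN iffD2, OF is_expfac_cfg_factor[OF i]] is_expfac_cfg_factor[OF j]]
    slope_nonneg[OF is_expfac_diff_ef[OF is_expfac_sigma_pow[THEN iffD2, OF is_expfac_factor[OF i]] is_expfac_factor[OF j]]]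
    coeff_map_agree_above_slope[OF i j] coeff_map_differ_at_slope[OF c i j]
  by simp

lemma coeff_map_in_config_space:
  assumes c: "c \<in> R_space Q"
  shows "coeff_map Q c \<in> config_space Q"
proof -
  have "coeff_map Q c x = 0" if "x \<notin> cfg_index Q" for x
    using that unfolding coeff_map_def by (cases x) simp
  moreover have "pit_sim (Q_of Q (coeff_map Q c)) Q"
    unfolding pit_sim_def cfg_factor_def[symmetric]
    using slope_coeff_map[OF c] by (simp add: slope_diff_ef_sigma_pow)
  ultimately show ?thesis unfolding config_space_def by simp
qed

section \<open>From points of the configuration space to coefficients on nodes\<close>

lemma config_space_slope_nat:
  assumes "a \<in> config_space Q" "i < length Q" "j < length Q" "k \<le> ram (factor i)" "l \<le> ram (factor j)"
  shows "slope (diff_ef (sigma_pow (int k) (cfg_factor a i)) (sigma_pow (int l) (cfg_factor a j))) =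
    slope (diff_ef (sigma_pow (int k) (factor i)) (sigma_pow (int l) (factor j)))"
proof -
  have "pit_sim (Q_of Q a) Q" using assms(1) unfolding config_space_def by simp
  then have "\<forall>i<length Q. \<forall>j<length Q. \<forall>k l :: nat. k \<le> ram (factor i) \<longrightarrow> l \<le> ram (factor j) \<longrightarrow>
      slope (diff_ef (sigma_pow (int k) (cfg_factor a i)) (sigma_pow (int l) (cfg_factor a j))) =
      slope (diff_ef (sigma_pow (int k) (factor i)) (sigma_pow (int l) (factor j)))"
    unfolding pit_sim_def cfg_factor_def by (elim conjE)
  then show ?thesis using assms(2-5) by blast
qed

lemma cfg_factor_nonzero_admissible:
  assumes a: "a \<in> config_space Q" and i: "i < length Q" and nz: "cfg_factor a i e \<noteq> 0"
  shows "e \<in> adm i"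
proof (rule ccontr)
  have fi: "is_expfac (factor i)" using is_expfac_factor[OF i] .
  assume "e \<notin> adm i"
  then obtain e0 where e0: "e0 > 0" "e0 \<notin> adm i"
      "slope (diff_ef (cfg_factor a i) (sigma_pow (level_ram (Levels (factor i)) e0) (cfg_factor a i))) = e0"
    using exists_slope_sub_sigma_pow_level_ram[OF finite_Levels[OF fi] is_expfac_cfg_factor[OF i, of a] nz]
    by blast
  \<comment> \<open>rotating by \<open>t\<close> detects \<open>e0\<close> in \<open>Q\<^sub>a\<close>, but not in \<open>Q\<close>, whose coefficient at \<open>e0\<close> is zero\<close>
  define t where "t = level_ram (Levels (factor i)) e0"
  have "t > 0" unfolding t_def using level_ram_pos[OF finite_Levels[OF fi]] .
  moreover have "t \<le> int (ram (factor i))"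
    unfolding t_def using level_ram_dvd_ram[OF fi] ram_ge_1[OF fi] by (simp add: zdvd_imp_le)
  ultimately have "slope (diff_ef (sigma_pow t (cfg_factor a i)) (cfg_factor a i)) =
      slope (diff_ef (sigma_pow t (factor i)) (factor i))"
    using config_space_slope_nat[OF a i i, of "nat t" 0] by simp
  moreover have "slope (diff_ef (sigma_pow t (cfg_factor a i)) (cfg_factor a i)) = e0"
    using e0(3) slope_diff_ef_commute is_expfac_cfg_factor[OF i, of a] unfolding t_def by simp
  ultimately have "sigma_pow t (factor i) e0 \<noteq> factor i e0"
    using slope_diff_ef_iff[of "sigma_pow t (factor i)" "factor i" e0] fi e0(1) by simp
  then have "factor i e0 \<noteq> 0" by (auto simp: sigma_pow_apply)
  then show False using coeff_nonzero_admissible[OF fi] e0(2) by blast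
qed

text \<open>
  \<open>pit_sim\<close> only records rotations by \<open>0, \<dots>, ram q\<^sub>i\<close>; since all exponents of both
  \<open>q\<^sub>i\<close> and the \<open>i\<close>-th component of \<open>Q\<^sub>a\<close> lie in \<open>(1 / ram q\<^sub>i) \<int>\<close>, rotations only matter modulo
  \<open>ram q\<^sub>i\<close>.
\<close>

lemma config_space_slope:
  assumes a: "a \<in> config_space Q" and i: "i < length Q" and j: "j < length Q"
  shows "slope (diff_ef (sigma_pow n (cfg_factor a i)) (cfg_factor a j)) =
    slope (diff_ef (sigma_pow n (factor i)) (factor j))"
proof -
  have fi: "is_expfac (factor i)" using is_expfac_factor[OF i] .
  define R where "R = int (ram (factor i))"
  have R: "R > 0" unfolding R_def using ram_ge_1[OF fi] by simp
  have "sigma_pow n (cfg_factor a i) = sigma_pow (n mod R) (cfg_factor a i)"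
    using R cfg_factor_nonzero_admissible[OF a i] ram_mult_admissible_Ints[OF fi]
    unfolding R_def by (intro sigma_pow_mod) auto
  moreover have "sigma_pow n (factor i) = sigma_pow (n mod R) (factor i)"
    using R ram_mult_Ints[OF fi] unfolding R_def by (intro sigma_pow_mod) auto
  moreover have "nat (n mod R) \<le> ram (factor i)" "int (nat (n mod R)) = n mod R"
    using R unfolding R_def by (simp_all add: nat_le_iff less_imp_le)
  ultimately show ?thesis using config_space_slope_nat[OF a i j, of "nat (n mod R)" 0] by simp
qed

lemma cfg_factor_eq_if_trunc_eq:
  assumes a: "a \<in> config_space Q" and i: "i < length Q" and j: "j < length Q"
    and e: "e > 0" and tr: "trunc e (factor i) = trunc e (factor j)"
  shows "cfg_factor a i e = cfg_factor a j e"
proof -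
  define h where "h = slope (diff_ef (factor i) (factor j))"
  have "h < e"
  proof (rule ccontr)
    assume "\<not> h < e"
    then have "factor i h \<noteq> factor j h"
      using slope_diff_ef_iff[OF is_expfac_factor[OF i] is_expfac_factor[OF j], of h] h_def e by simp
    then show False using tr \<open>\<not> h < e\<close> by (simp add: trunc_eq_iff)
  qed
  moreover have "slope (diff_ef (cfg_factor a i) (cfg_factor a j)) = h"
    using config_space_slope[OF a i j, of 0] h_def by simp
  ultimately show ?thesis
    using slope_diff_ef_iff[OF is_expfac_cfg_factor[OF i, of a] is_expfac_cfg_factor[OF j, of a], of h] by simp
qed

lemma cfg_factor_nonzero_at_level:
  assumes a: "a \<in> config_space Q" and i: "i < length Q" and L: "h \<in> Levels (factor i)"
  shows "cfg_factor a i h \<noteq> 0"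
proof -
  have fi: "is_expfac (factor i)" using is_expfac_factor[OF i] .
  obtain n where "slope (diff_ef (factor i) (sigma_pow n (factor i))) = h"
    using L unfolding Levels_def by auto
  then have "slope (diff_ef (sigma_pow n (cfg_factor a i)) (cfg_factor a i)) = h"
    using config_space_slope[OF a i i, of n] slope_diff_ef_commute fi by simp
  then have "sigma_pow n (cfg_factor a i) h \<noteq> cfg_factor a i h"
    using slope_diff_ef_iff[of "sigma_pow n (cfg_factor a i)" "cfg_factor a i" h]
      is_expfac_cfg_factor[OF i, of a] Levels_pos[OF fi L] by simp
  then show ?thesis by (auto simp: sigma_pow_apply)
qed

lemma cfg_factor_siblings_differ:
  assumes a: "a \<in> config_space Q" and i: "i < length Q" and j: "j < length Q"
    and h: "consecutive_heights h h'" and tr': "trunc h' (factor i) = trunc h' (factor j)"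
    and ntr: "trunc h (factor i) \<noteq> trunc h (factor j)"
  shows "cfg_factor a i h \<noteq> cfg_factor a j h"
proof -
  have "slope (diff_ef (cfg_factor a i) (cfg_factor a j)) = h"
    using config_space_slope[OF a i j, of 0] slope_siblings[OF i j h tr' ntr] by simp
  moreover have "h > 0" using h AQ_pos unfolding consecutive_heights_def by blast
  ultimately show ?thesis
    using slope_diff_ef_iff[OF is_expfac_cfg_factor[OF i, of a] is_expfac_cfg_factor[OF j, of a], of h] by simp
qed

lemma sigma_pow_sibling_agree_strictly_above:
  assumes i: "i < length Q" and j: "j < length Q" and h: "consecutive_heights h h'"
    and tr': "trunc h' (factor i) = trunc h' (factor j)"
    and Ints: "\<And>x. h' \<le> x \<Longrightarrow> factor i x \<noteq> 0 \<Longrightarrow> of_int l * x \<in> \<int>" and x: "h < x"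
  shows "sigma_pow l (factor j) x = factor i x"
proof -
  have same: "factor i x = factor j x" by (rule siblings_agree_strictly_above[OF i j h tr' x])
  show ?thesis
  proof (cases "factor j x = 0")
    case False
    then have "x \<in> AQ Q" by (rule coeff_nonzero_AQ[OF j])
    then have "\<not> x < h'" using h x unfolding consecutive_heights_def by blast
    then have "of_int l * x \<in> \<int>" using Ints False same by simp
    then show ?thesis by (simp add: sigma_pow_apply same)
  qed (simp add: same sigma_pow_apply)
qed

lemma cfg_factor_mandatory_siblings_differ:
  assumes a: "a \<in> config_space Q" and i: "i < length Q" and j: "j < length Q"
    and h: "consecutive_heights h h'" and tr': "trunc h' (factor i) = trunc h' (factor j)"
    and ntr: "trunc h (factor i) \<noteq> trunc h (factor j)" and nz: "cfg_factor a j h \<noteq> 0"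
  shows "cfg_factor a i h ^ node_N Q (node_at h' i) \<noteq> cfg_factor a j h ^ node_N Q (node_at h' i)"
proof
  let ?p = "cfg_factor a"
  have fi: "is_expfac (factor i)" and fj: "is_expfac (factor j)" using is_expfac_factor i j by auto
  have hpos: "h > 0" using h AQ_pos unfolding consecutive_heights_def by blast
  assume "?p i h ^ node_N Q (node_at h' i) = ?p j h ^ node_N Q (node_at h' i)"
  then have "(?p i h / ?p j h) ^ node_N Q (node_at h' i) = 1" using nz by (simp add: power_divide)
  then obtain l where l: "zeta (of_int l * h) = ?p i h / ?p j h"
      and Ints: "\<And>x. h' \<le> x \<Longrightarrow> factor i x \<noteq> 0 \<Longrightarrow> of_int l * x \<in> \<int>"
    by (rule root_of_unity_rotation[OF h i]) (rule that)
  have above: "sigma_pow l (factor j) x = factor i x" if "h < x" for x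
    using sigma_pow_sibling_agree_strictly_above[OF i j h tr' Ints that] .
  have "sigma_pow l (factor j) h \<noteq> factor i h"
  proof
    assume at: "sigma_pow l (factor j) h = factor i h"
    have "\<forall>x\<ge>h. factor i x = sigma_pow l (factor j) x"
    proof (intro allI impI)
      fix x assume "h \<le> x"
      then show "factor i x = sigma_pow l (factor j) x" using above at by (cases "x = h") auto
    qed
    then have "stokes_circle (trunc h (factor j)) = stokes_circle (trunc h (factor i))"
      by (rule stokes_circle_trunc_eq)
    then show False using stokes_circle_trunc_eq_iff[OF j i hpos] ntr by simp
  qed
  then have "slope (diff_ef (sigma_pow l (factor j)) (factor i)) = h"
    using slope_diff_ef_iff[of "sigma_pow l (factor j)" "factor i" h] fi fj hpos above by simp
  then have "sigma_pow l (?p j) h \<noteq> ?p i h"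
    using config_space_slope[OF a j i, of l] hpos slope_diff_ef_iff[of "sigma_pow l (?p j)" "?p i" h]
      is_expfac_cfg_factor[OF i, of a] is_expfac_cfg_factor[OF j, of a]
    by simp
  moreover have "sigma_pow l (?p j) h = ?p i h" using l nz by (simp add: sigma_pow_apply)
  ultimately show False by simp
qed

definition node_index :: "node \<Rightarrow> nat \<times> nat" where
  "node_index v = (SOME (i, j). i < length Q \<and> 1 \<le> j \<and> j \<le> cfg_s Q \<and>
     v = node_at (of_nat j / of_nat (cfg_r Q)) i \<and> of_nat j / of_nat (cfg_r Q) \<in> adm i)"

lemma node_indexE:
  assumes "v \<in> A_flat Q"
  obtains i j where "node_index v = (i, j)" "i < length Q" "1 \<le> j" "j \<le> cfg_s Q"
    "v = node_at (of_nat j / of_nat (cfg_r Q)) i" "of_nat j / of_nat (cfg_r Q) \<in> adm i"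
proof -
  obtain i where i: "i < length Q" "snd v = stokes_circle (trunc (fst v) (factor i))" "fst v \<in> adm i"
    using assms unfolding A_flat_def admissible_node_def by blast
  moreover obtain j where j: "1 \<le> j" "j \<le> cfg_s Q" "fst v = of_nat j / of_nat (cfg_r Q)"
    using grid_index_of_admissible[OF i(1,3)] assms unfolding A_flat_def by blast
  ultimately have "v = node_at (of_nat j / of_nat (cfg_r Q)) i"
    unfolding node_at_def by (cases v) simp
  then have "\<exists>ij. case ij of (i, j) \<Rightarrow> i < length Q \<and> 1 \<le> j \<and> j \<le> cfg_s Q \<and>
      v = node_at (of_nat j / of_nat (cfg_r Q)) i \<and> of_nat j / of_nat (cfg_r Q) \<in> adm i"
    using i j by (intro exI[of _ "(i, j)"]) simp
  then have "case node_index v of (i, j) \<Rightarrow> i < length Q \<and> 1 \<le> j \<and> j \<le> cfg_s Q \<and>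
      v = node_at (of_nat j / of_nat (cfg_r Q)) i \<and> of_nat j / of_nat (cfg_r Q) \<in> adm i"
    unfolding node_index_def by (rule someI_ex)
  moreover obtain i0 j0 where ij: "node_index v = (i0, j0)" by (cases "node_index v")
  ultimately have "i0 < length Q" "1 \<le> j0" "j0 \<le> cfg_s Q"
      "v = node_at (of_nat j0 / of_nat (cfg_r Q)) i0" "of_nat j0 / of_nat (cfg_r Q) \<in> adm i0"
    by simp_all
  then show ?thesis by (rule that[OF ij])
qed

definition node_coeffs :: "(nat \<times> nat \<Rightarrow> complex) \<Rightarrow> node \<Rightarrow> complex" where
  "node_coeffs a v = (if v \<in> A_flat Q then a (node_index v) else 0)"

lemma node_coeffs_node_at:
  assumes a: "a \<in> config_space Q" and i: "i < length Q" and v: "node_at e i \<in> A_flat Q"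
  shows "node_coeffs a (node_at e i) = cfg_factor a i e"
proof -
  obtain i0 j0 where idx: "node_index (node_at e i) = (i0, j0)" "i0 < length Q" "1 \<le> j0" "j0 \<le> cfg_s Q"
      "node_at e i = node_at (of_nat j0 / of_nat (cfg_r Q)) i0" "of_nat j0 / of_nat (cfg_r Q) \<in> adm i0"
    by (rule node_indexE[OF v])
  then have e: "e = of_nat j0 / of_nat (cfg_r Q)" by (simp add: node_at_def)
  have "node_at e i0 = node_at e i" using idx(5) e by simp
  then have "trunc e (factor i0) = trunc e (factor i)"
    using node_at_eq_iff[OF idx(2) i admissible_exps_pos[OF idx(6)[folded e]]] by simp
  then have "cfg_factor a i0 e = cfg_factor a i e"
    by (rule cfg_factor_eq_if_trunc_eq[OF a idx(2) i admissible_exps_pos[OF idx(6)[folded e]]])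
  moreover have "node_coeffs a (node_at e i) = cfg_factor a i0 e"
    unfolding node_coeffs_def e using v idx(1) cfg_factor_grid[OF idx(2-4)] e by simp
  ultimately show ?thesis by simp
qed

lemma node_coeffs_nonzero_mandatory:
  assumes a: "a \<in> config_space Q" and v: "v \<in> A_flat Q" "mandatory_node Q v"
  shows "node_coeffs a v \<noteq> 0"
proof -
  obtain i where i: "i < length Q" "v = node_at (fst v) i" "fst v \<in> Levels (factor i)"
    using v(2) unfolding mandatory_node_def node_at_def by (cases v) auto
  then have "node_coeffs a v = cfg_factor a i (fst v)"
    using node_coeffs_node_at[OF a i(1), of "fst v"] v(1) by simp
  then show ?thesis using cfg_factor_nonzero_at_level[OF a i(1,3)] by simp
qed

lemma node_coeffs_siblings:
  assumes a: "a \<in> config_space Q" and A: "u \<in> A_flat Q" "w \<in> A_flat Q"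
    and P: "u \<noteq> w" "is_parent Q u p" "is_parent Q w p"
  obtains i j h h' where "i < length Q" "j < length Q" "consecutive_heights h h'"
    "trunc h' (factor i) = trunc h' (factor j)" "trunc h (factor i) \<noteq> trunc h (factor j)"
    "p = node_at h' i" "node_coeffs a u = cfg_factor a i h" "node_coeffs a w = cfg_factor a j h"
proof -
  obtain i j h h' where S: "i < length Q" "j < length Q" "consecutive_heights h h'"
      "u = node_at h i" "w = node_at h j" "p = node_at h' i"
      "trunc h' (factor i) = trunc h' (factor j)" "trunc h (factor i) \<noteq> trunc h (factor j)"
    by (rule common_parent_siblings[OF P])
  have "node_coeffs a u = cfg_factor a i h" "node_coeffs a w = cfg_factor a j h"
    using node_coeffs_node_at[OF a S(1)] node_coeffs_node_at[OF a S(2)] A S(4,5) by simp_all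
  then show ?thesis by (rule that[OF S(1-3,7,8,6)])
qed

lemma node_coeffs_in_R_space:
  assumes a: "a \<in> config_space Q"
  shows "node_coeffs a \<in> R_space Q"
  unfolding R_space_def mem_Collect_eq
proof (intro conjI ballI allI impI)
  show "node_coeffs a v = 0" if "v \<notin> A_flat Q" for v using that unfolding node_coeffs_def by simp
  show "node_coeffs a v \<noteq> 0" if "v \<in> A_flat Q" "mandatory_node Q v" for v
    using node_coeffs_nonzero_mandatory[OF a] that .
next
  fix u w p assume A: "u \<in> A_flat Q" "w \<in> A_flat Q"
    and "u \<noteq> w \<and> \<not> mandatory_node Q u \<and> \<not> mandatory_node Q w \<and> is_parent Q u p \<and> is_parent Q w p"
  then have "u \<noteq> w" "is_parent Q u p" "is_parent Q w p" by simp_all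
  then obtain i j h h' where S: "i < length Q" "j < length Q" "consecutive_heights h h'"
      "trunc h' (factor i) = trunc h' (factor j)" "trunc h (factor i) \<noteq> trunc h (factor j)"
      "p = node_at h' i" "node_coeffs a u = cfg_factor a i h" "node_coeffs a w = cfg_factor a j h"
    by (rule node_coeffs_siblings[OF a A])
  then show "node_coeffs a u \<noteq> node_coeffs a w"
    using cfg_factor_siblings_differ[OF a S(1-5)] by simp
next
  fix u w p assume A: "u \<in> A_flat Q" "w \<in> A_flat Q"
    and H: "u \<noteq> w \<and> mandatory_node Q u \<and> mandatory_node Q w \<and> is_parent Q u p \<and> is_parent Q w p"
  then have "u \<noteq> w" "is_parent Q u p" "is_parent Q w p" by simp_all
  then obtain i j h h' where S: "i < length Q" "j < length Q" "consecutive_heights h h'"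
      "trunc h' (factor i) = trunc h' (factor j)" "trunc h (factor i) \<noteq> trunc h (factor j)"
      "p = node_at h' i" "node_coeffs a u = cfg_factor a i h" "node_coeffs a w = cfg_factor a j h"
    by (rule node_coeffs_siblings[OF a A])
  moreover have "cfg_factor a j h \<noteq> 0" using node_coeffs_nonzero_mandatory[OF a A(2)] H S(8) by simp
  ultimately show "node_coeffs a u ^ node_N Q p \<noteq> node_coeffs a w ^ node_N Q p"
    using cfg_factor_mandatory_siblings_differ[OF a S(1-5)] by simp
qed

lemma coeff_map_node_coeffs:
  assumes a: "a \<in> config_space Q"
  shows "coeff_map Q (node_coeffs a) = a"
proof
  fix x :: "nat \<times> nat"
  obtain i j where x: "x = (i, j)" by (cases x)
  define e where "e = (of_nat j / of_nat (cfg_r Q) :: rat)"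
  show "coeff_map Q (node_coeffs a) x = a x"
  proof (cases "(i, j) \<in> cfg_index Q")
    case False
    then show ?thesis using a unfolding x coeff_map_apply config_space_def by simp
  next
    case True
    then have i: "i < length Q" and j: "1 \<le> j" "j \<le> cfg_s Q" unfolding cfg_index_def by auto
    have aij: "a (i, j) = cfg_factor a i e" unfolding e_def by (rule cfg_factor_grid[OF i j, symmetric])
    show ?thesis
    proof (cases "e \<in> adm i")
      case True
      have "node_at e i \<in> A_flat Q"
        using node_at_in_A_flat[OF i True] grid_point_bounds[OF j] unfolding e_def by simp
      then show ?thesis
        using node_coeffs_node_at[OF a i] \<open>(i, j) \<in> cfg_index Q\<close> True aij
        unfolding x coeff_map_apply e_def by simp
    next
      case False
      then have "cfg_factor a i e = 0" using cfg_factor_nonzero_admissible[OF a i] by blast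
      then show ?thesis using False aij unfolding x coeff_map_apply e_def by simp
    qed
  qed
qed

lemma node_coeffs_coeff_map:
  assumes c: "c \<in> R_space Q"
  shows "node_coeffs (coeff_map Q c) = c"
proof
  fix v
  show "node_coeffs (coeff_map Q c) v = c v"
  proof (cases "v \<in> A_flat Q")
    case False
    then show ?thesis unfolding node_coeffs_def using R_spaceD(1)[OF c] by simp
  next
    case True
    then obtain i j where idx: "node_index v = (i, j)" "i < length Q" "1 \<le> j" "j \<le> cfg_s Q"
        "v = node_at (of_nat j / of_nat (cfg_r Q)) i" "of_nat j / of_nat (cfg_r Q) \<in> adm i"
      by (rule node_indexE)
    then have "(i, j) \<in> cfg_index Q" unfolding cfg_index_def by simp
    then show ?thesis unfolding node_coeffs_def using True idx(1,5,6) by (simp add: coeff_map_apply)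
  qed
qed

section \<open>The homeomorphism\<close>

lemma continuous_on_coordinate_if: "continuous_on S (\<lambda>f. if P then f x else 0)"
  using continuous_on_subset[OF continuous_on_product_coordinates subset_UNIV] by (cases P) simp_all

lemma continuous_on_coeff_map: "continuous_on S (coeff_map Q)"
proof (rule continuous_on_coordinatewise_then_product)
  fix x :: "nat \<times> nat"
  show "continuous_on S (\<lambda>c. coeff_map Q c x)"
    by (cases x) (simp only: coeff_map_apply continuous_on_coordinate_if)
qed

lemma continuous_on_node_coeffs: "continuous_on S node_coeffs"
  unfolding node_coeffs_def
  by (intro continuous_on_coordinatewise_then_product continuous_on_coordinate_if)

lemma homeomorphism_coeff_map: "homeomorphism (R_space Q) (config_space Q) (coeff_map Q) node_coeffs"
  by (rule homeomorphismI)
    (auto simp: continuous_on_coeff_map continuous_on_node_coeffs coeff_map_in_config_space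
      node_coeffs_in_R_space node_coeffs_coeff_map coeff_map_node_coeffs)

end

theorem mainTheorem11:
  fixes Q :: pit
  assumes "pointed_irregular_type Q"
    and "compatible Q"
  shows "\<exists>g. homeomorphism (R_space Q) (config_space Q) (coeff_map Q) g"
proof -
  interpret compatible_pit Q using assms by (rule compatible_pit.intro)
  show ?thesis using homeomorphism_coeff_map by blast
qed

end
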